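(* Let $U\in\mathcal{B}(\ell^2(\mathbb{N}))$ be an isometry, $\Omega=\Omega_1\cup\dots\cup\Omega_r$ an $(\mathbf{N},\mathbf{m})$-multilevel Bernoulli sampling scheme with $1\le N_1<\dots<N_r$, $\mathbf{M}=(M_1,\dots,M_r)$ increasing, $\mathbf{s}\in\mathbb{N}^r$, $\Delta=\cup_k\Delta_k$ with $\Delta_k\subseteq\{M_{k-1}+1,\dots,M_k\}$, $|\Delta_k|=s_k$, $s=\sum s_k$, $q_k=m_k/(N_k-N_{k-1})$, $D=\sum_kq_k^{-1}P_{\Omega_k}$, $N=N_r$, $K=\max_k(N_k-N_{k-1})/m_k$, $M=M_r$. Suppose $N$ and $K$ satisfy the weak balancing property with respect to $U$, $M$, $s$. Then for $\xi\in\ell^2(\mathbb{N})$ and $\gamma>0$, $$\mathbb{P}\big(\|(P_\Delta U^*DUP_\Delta-P_\Delta)\xi\|_{\ell^\infty}>\tilde\alpha\|\xi\|_{\ell^\infty}\big)\le\gamma,\qquad\tilde\alpha=\big(2\log_2^{1/2}(4\sqrt sKM)\big)^{-1},$$ provided $1\gtrsim\Lambda\cdot(\log(s\gamma^{-1})+1)\cdot\log(\sqrt sKM)$ and $1\gtrsim\Upsilon\cdot(\log(s\gamma^{-1})+1)\cdot\log(\sqrt sKM)$. Also, $\mathbb{P}\big(\|(P_\Delta U^*DUP_\Delta-P_\Delta)\xi\|_{\ell^\infty}>\frac12\|\xi\|_{\ell^\infty}\big)\le\gamma$ provided $1\gtrsim\Lambda(\log(s\gamma^{-1})+1)$ and $1\gtrsim\Upsilon(\log(s\gamma^{-1})+1)$.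 Moreover, if $q_k=1$ for all $k$, both probabilities are zero.
   Context: $N_0=M_0=0$. Multilevel Bernoulli scheme: $\Omega_k=\{j\in\{N_{k-1}+1,\dots,N_k\}:\delta_j=1\}$, $\delta_j$ independent with $\mathbb{P}(\delta_j=1)=q_k$. $P^a_b$ projects onto $\mathrm{span}\{e_{a+1},\dots,e_b\}$, $P_\Gamma$ onto $\mathrm{span}\{e_j:j\in\Gamma\}$. $\mu(A)=\sup|a_{ij}|^2$; $\mu_{\mathbf{N},\mathbf{M}}(k,l)=\sqrt{\mu(P^{N_{k-1}}_{N_k}UP^{M_{l-1}}_{M_l})\mu(P^{N_{k-1}}_{N_k}U)}$; $\kappa_{\mathbf{N},\mathbf{M}}(k,l)=\max_{\eta\in\Theta'}\|P^{N_{k-1}}_{N_k}UP^{M_{l-1}}_{M_l}\eta\|_{\ell^\infty}\sqrt{\mu(P^{N_{k-1}}_{N_k}U)}$ with $\Theta'=\{\eta:\|\eta\|_\infty\le1,\ |\mathrm{supp}(P^{M_{l-1}}_{M_l}\eta)|=s_l\ (l<r),\ |\mathrm{supp}(P^\perp_{M_{r-1}}\eta)|=s_r\}$; $S_k=\max_{\eta\in\Theta}\|P^{N_{k-1}}_{N_k}U\eta\|^2$, $\Theta=\{\eta:\|\eta\|_\infty\le1,|\mathrm{supp}(P^{M_{l-1}}_{M_l}\eta)|=s_l,\ l=1..r\}$. $\Lambda=\max_k\frac{N_k-N_{k-1}}{m_k}\sum_{l=1}^r\kappa_{\mathbf{N},\mathbf{M}}(k,l)$; $\Upsilon=\sup\max_l\sum_k(\frac{N_k-N_{k-1}}{m_k}-1)\mu_{\mathbf{N},\mathbf{M}}(k,l)\tilde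 s_k$ over $\tilde s_k\ge0$ with $\sum\tilde s_k\le s$, $\tilde s_k\le S_k$. Weak balancing property: $\|P_MU^*P_NUP_M-P_M\|_{\ell^\infty\to\ell^\infty}\le\frac18(\log_2^{1/2}(4\sqrt sKM))^{-1}$. $a\gtrsim b$: $a\ge C_0b$ for a suitable universal constant. Throughout $s\ge3$. *)

theory Defs
  imports "HOL-Probability.Probability"
begin

(* Conventions: the paper's basis e_1, e_2, ... of l^2(N) is indexed here by
   0, 1, 2, ... (e_{j+1} <-> index j).  P^a_b (span of e_{a+1},...,e_b) thus
   corresponds to the index set {a..<b}.  Levels are numbered k = 1..r and
   the sequences Nv, Mv satisfy Nv 0 = Mv 0 = 0.
   Operators on l^2(N) are represented by their (infinite) matrices
   u i j = <U e_j, e_i>. *)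

definition isometry_matrix :: "(nat \<Rightarrow> nat \<Rightarrow> complex) \<Rightarrow> bool" where
  "isometry_matrix u \<longleftrightarrow>
     (\<forall>j. summable (\<lambda>i. (cmod (u i j))\<^sup>2)) \<and>
     (\<forall>i j. (\<Sum>k. cnj (u k i) * u k j) = (if i = j then 1 else 0))"

definition ell2 :: "(nat \<Rightarrow> complex) \<Rightarrow> bool" where
  "ell2 x \<longleftrightarrow> summable (\<lambda>i. (cmod (x i))\<^sup>2)"

definition linfty :: "(nat \<Rightarrow> complex) \<Rightarrow> real" where
  "linfty x = (SUP i. cmod (x i))"

definition lev :: "(nat \<Rightarrow> nat) \<Rightarrow> nat \<Rightarrow> nat set" where
  "lev A k = {A (k - 1)..<A k}"

(* mu(A) = sup |a_ij|^2 ; the supremum of the empty family (zero operator) is 0 *)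
definition mu_block :: "(nat \<Rightarrow> nat \<Rightarrow> complex) \<Rightarrow> (nat \<Rightarrow> nat) \<Rightarrow> (nat \<Rightarrow> nat) \<Rightarrow> nat \<Rightarrow> nat \<Rightarrow> real" where
  "mu_block u Nv Mv k l = Sup (insert 0 {(cmod (u i j))\<^sup>2 | i j. i \<in> lev Nv k \<and> j \<in> lev Mv l})"

definition mu_rows :: "(nat \<Rightarrow> nat \<Rightarrow> complex) \<Rightarrow> (nat \<Rightarrow> nat) \<Rightarrow> nat \<Rightarrow> real" where
  "mu_rows u Nv k = Sup (insert 0 {(cmod (u i j))\<^sup>2 | i j. i \<in> lev Nv k})"

definition muNM :: "(nat \<Rightarrow> nat \<Rightarrow> complex) \<Rightarrow> (nat \<Rightarrow> nat) \<Rightarrow> (nat \<Rightarrow> nat) \<Rightarrow> nat \<Rightarrow> nat \<Rightarrow> real" where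
  "muNM u Nv Mv k l = sqrt (mu_block u Nv Mv k l * mu_rows u Nv k)"

definition Theta' :: "nat \<Rightarrow> (nat \<Rightarrow> nat) \<Rightarrow> (nat \<Rightarrow> nat) \<Rightarrow> (nat \<Rightarrow> complex) set" where
  "Theta' r Mv sv = {\<eta>. (\<forall>j. cmod (\<eta> j) \<le> 1) \<and>
      (\<forall>l\<in>{1..<r}. card {j \<in> lev Mv l. \<eta> j \<noteq> 0} = sv l) \<and>
      finite {j. Mv (r - 1) \<le> j \<and> \<eta> j \<noteq> 0} \<and>
      card {j. Mv (r - 1) \<le> j \<and> \<eta> j \<noteq> 0} = sv r}"

definition Theta :: "nat \<Rightarrow> (nat \<Rightarrow> nat) \<Rightarrow> (nat \<Rightarrow> nat) \<Rightarrow> (nat \<Rightarrow> complex) set" where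
  "Theta r Mv sv = {\<eta>. (\<forall>j. cmod (\<eta> j) \<le> 1) \<and> (\<forall>j. Mv r \<le> j \<longrightarrow> \<eta> j = 0) \<and>
      (\<forall>l\<in>{1..r}. card {j \<in> lev Mv l. \<eta> j \<noteq> 0} = sv l)}"

definition block_linf :: "(nat \<Rightarrow> nat \<Rightarrow> complex) \<Rightarrow> (nat \<Rightarrow> nat) \<Rightarrow> (nat \<Rightarrow> nat) \<Rightarrow> nat \<Rightarrow> nat \<Rightarrow> (nat \<Rightarrow> complex) \<Rightarrow> real" where
  "block_linf u Nv Mv k l \<eta> = linfty (\<lambda>i. if i \<in> lev Nv k then (\<Sum>j\<in>lev Mv l. u i j * \<eta> j) else 0)"

definition kappaNM :: "(nat \<Rightarrow> nat \<Rightarrow> complex) \<Rightarrow> nat \<Rightarrow> (nat \<Rightarrow> nat) \<Rightarrow> (nat \<Rightarrow> nat) \<Rightarrow> (nat \<Rightarrow> nat) \<Rightarrow> nat \<Rightarrow> nat \<Rightarrow> real" where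
  "kappaNM u r Nv Mv sv k l =
     (SUP \<eta>\<in>Theta' r Mv sv. block_linf u Nv Mv k l \<eta>) * sqrt (mu_rows u Nv k)"

definition Sk :: "(nat \<Rightarrow> nat \<Rightarrow> complex) \<Rightarrow> nat \<Rightarrow> (nat \<Rightarrow> nat) \<Rightarrow> (nat \<Rightarrow> nat) \<Rightarrow> (nat \<Rightarrow> nat) \<Rightarrow> nat \<Rightarrow> real" where
  "Sk u r Nv Mv sv k =
     (SUP \<eta>\<in>Theta r Mv sv. \<Sum>i\<in>lev Nv k. (cmod (\<Sum>j<Mv r. u i j * \<eta> j))\<^sup>2)"

definition ratio :: "(nat \<Rightarrow> nat) \<Rightarrow> (nat \<Rightarrow> nat) \<Rightarrow> nat \<Rightarrow> real" where
  "ratio Nv mv k = real (Nv k - Nv (k - 1)) / real (mv k)"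

definition Lambda :: "(nat \<Rightarrow> nat \<Rightarrow> complex) \<Rightarrow> nat \<Rightarrow> (nat \<Rightarrow> nat) \<Rightarrow> (nat \<Rightarrow> nat) \<Rightarrow> (nat \<Rightarrow> nat) \<Rightarrow> (nat \<Rightarrow> nat) \<Rightarrow> real" where
  "Lambda u r Nv Mv mv sv =
     Max ((\<lambda>k. ratio Nv mv k * (\<Sum>l=1..r. kappaNM u r Nv Mv sv k l)) ` {1..r})"

definition Upsilon :: "(nat \<Rightarrow> nat \<Rightarrow> complex) \<Rightarrow> nat \<Rightarrow> (nat \<Rightarrow> nat) \<Rightarrow> (nat \<Rightarrow> nat) \<Rightarrow> (nat \<Rightarrow> nat) \<Rightarrow> (nat \<Rightarrow> nat) \<Rightarrow> real" where
  "Upsilon u r Nv Mv mv sv =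
     Sup {Max ((\<lambda>l. \<Sum>k=1..r. (ratio Nv mv k - 1) * muNM u Nv Mv k l * t k) ` {1..r}) | t.
            (\<forall>k\<in>{1..r}. 0 \<le> t k \<and> t k \<le> Sk u r Nv Mv sv k) \<and>
            (\<Sum>k=1..r. t k) \<le> real (\<Sum>k=1..r. sv k)}"

definition Kmax :: "nat \<Rightarrow> (nat \<Rightarrow> nat) \<Rightarrow> (nat \<Rightarrow> nat) \<Rightarrow> real" where
  "Kmax r Nv mv = Max (ratio Nv mv ` {1..r})"

(* || P_M U^* P_N U P_M - P_M ||_{l^infty -> l^infty} *)
definition balance_opnorm :: "(nat \<Rightarrow> nat \<Rightarrow> complex) \<Rightarrow> nat \<Rightarrow> nat \<Rightarrow> real" where
  "balance_opnorm u N M =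
     Sup {linfty (\<lambda>i. if i < M then
              (\<Sum>j<M. ((\<Sum>k<N. cnj (u k i) * u k j) - (if i = j then 1 else 0)) * x j) else 0)
          | x. \<forall>j. cmod (x j) \<le> 1}"

definition weak_balancing :: "(nat \<Rightarrow> nat \<Rightarrow> complex) \<Rightarrow> nat \<Rightarrow> real \<Rightarrow> nat \<Rightarrow> nat \<Rightarrow> bool" where
  "weak_balancing u N K M s \<longleftrightarrow>
     balance_opnorm u N M \<le> 1 / 8 * inverse (sqrt (log 2 (4 * sqrt (real s) * K * real M)))"

definition qlev :: "(nat \<Rightarrow> nat) \<Rightarrow> (nat \<Rightarrow> nat) \<Rightarrow> nat \<Rightarrow> real" where
  "qlev Nv mv k = real (mv k) / real (Nv k - Nv (k - 1))"

definition qidx :: "nat \<Rightarrow> (nat \<Rightarrow> nat) \<Rightarrow> (nat \<Rightarrow> nat) \<Rightarrow> nat \<Rightarrow> real" where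
  "qidx r Nv mv j = (\<Sum>k=1..r. if j \<in> lev Nv k then qlev Nv mv k else 0)"

(* multilevel Bernoulli scheme: delta_j independent Bernoulli(q_k), j < N_r;
   Omega = {j. delta j} *)
definition bernoulli_scheme :: "nat \<Rightarrow> (nat \<Rightarrow> nat) \<Rightarrow> (nat \<Rightarrow> nat) \<Rightarrow> (nat \<Rightarrow> bool) pmf" where
  "bernoulli_scheme r Nv mv = Pi_pmf {..<Nv r} False (\<lambda>j. bernoulli_pmf (qidx r Nv mv j))"

(* (P_Delta U^* D U P_Delta - P_Delta) xi, with D = sum_k q_k^{-1} P_{Omega_k} *)
definition err_vec :: "(nat \<Rightarrow> nat \<Rightarrow> complex) \<Rightarrow> nat \<Rightarrow> (nat \<Rightarrow> nat) \<Rightarrow> (nat \<Rightarrow> nat) \<Rightarrow> nat set \<Rightarrow> (nat \<Rightarrow> bool) \<Rightarrow> (nat \<Rightarrow> complex) \<Rightarrow> nat \<Rightarrow> complex" where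
  "err_vec u r Nv mv \<Delta> \<delta> \<xi> i =
     (if i \<in> \<Delta> then
        (\<Sum>k\<in>{k. k < Nv r \<and> \<delta> k}. cnj (u k i) *
            (complex_of_real (inverse (qidx r Nv mv k)) * (\<Sum>j\<in>\<Delta>. u k j * \<xi> j))) - \<xi> i
      else 0)"

end

theory Submission
  imports Defs "HOL-Analysis.Harmonic_Numbers"
begin

text \<open>The error \<open>(P\<^sub>\<Delta> U\<^sup>* D U P\<^sub>\<Delta> - P\<^sub>\<Delta>) \<xi>\<close> splits into the deterministic part
  \<open>(P\<^sub>\<Delta> U\<^sup>* P\<^sub>N U P\<^sub>\<Delta> - P\<^sub>\<Delta>) \<xi>\<close>, which weak balancing bounds by \<open>\<alpha> \<parallel>\<xi>\<parallel>\<^sub>\<infinity> / 4\<close>, and the random part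
  \<open>P\<^sub>\<Delta> U\<^sup>* (D - P\<^sub>N) U P\<^sub>\<Delta> \<xi>\<close>. Each coordinate of the random part is a sum over the rows \<open>k < N\<close>
  of independent centred terms \<open>(\<delta>\<^sub>k / q\<^sub>k - 1) a\<^sub>k\<close>; the coherences bound \<open>\<bar>a\<^sub>k\<bar> / q\<^sub>k\<close> by
  \<open>\<Lambda> \<parallel>\<xi>\<parallel>\<^sub>\<infinity>\<close> and the variance by \<open>\<Upsilon> \<parallel>\<xi>\<parallel>\<^sub>\<infinity>\<^sup>2\<close>, after a convexity argument replaces a vector
  supported in \<open>\<Delta>\<close> by one with support exactly \<open>\<Delta>\<close>, as required by \<open>\<Theta>'\<close> and \<open>\<Theta>\<close>. Bernstein's
  inequality and a union bound over the \<open>s\<close> coordinates of \<open>\<Delta>\<close> give both estimates. When every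
  \<open>q\<^sub>k = 1\<close> the random part vanishes, so the error never exceeds the deterministic bound.\<close>

lemma balancing_constant_bounds:
  fixes x :: real
  assumes x: "x \<ge> 4"
  defines "\<alpha> \<equiv> inverse (2 * sqrt (log 2 (4 * x)))"
  shows "\<alpha> > 0" "\<alpha> \<le> 1/4" "\<alpha>\<^sup>2 * ln x \<ge> 1/16" "\<alpha> * ln x \<ge> 1/4"
proof -
  define L where "L = log 2 (4 * x)"
  have log_4: "log 2 4 = (2::real)" using log_pow_cancel[of 2 2] by simp
  have log_x: "log 2 x \<ge> 2" using log_le_cancel_iff[of 2 4 x] x log_4 by simp
  have L_eq: "L = 2 + log 2 x"
    using x log_4 by (simp add: L_def log_mult)
  have log_le: "log 2 x \<le> 3/2 * ln x"
    using ln2_ge_two_thirds log_x by (simp add: log_def divide_simps)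
  have ln_x: "ln x \<ge> 4/3" using log_le log_x by linarith
  have L_le: "L \<le> 3 * ln x" using L_eq log_le ln_x by linarith
  have L_ge: "L \<ge> 4" using L_eq log_x by simp
  have sqrt_L: "sqrt L \<ge> 2" using L_ge real_le_rsqrt by force
  have \<alpha>_eq: "\<alpha> = inverse (2 * sqrt L)" by (simp add: \<alpha>_def L_def)
  show pos: "\<alpha> > 0" unfolding \<alpha>_eq using L_ge by simp
  show le: "\<alpha> \<le> 1/4" unfolding \<alpha>_eq using sqrt_L L_ge by (simp add: inverse_eq_divide divide_simps)
  have "\<alpha>\<^sup>2 = 1 / (4 * L)" unfolding \<alpha>_eq using L_ge by (simp add: power_divide power_mult_distrib inverse_eq_divide)
  then have "1 = \<alpha>\<^sup>2 * (4 * L)" using L_ge by simp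
  also have "\<dots> \<le> \<alpha>\<^sup>2 * (12 * ln x)" using L_le by (intro mult_left_mono) auto
  finally show sq: "\<alpha>\<^sup>2 * ln x \<ge> 1/16" by linarith
  have "\<alpha>\<^sup>2 * ln x \<le> 1/4 * (\<alpha> * ln x)"
    using pos le ln_x by (simp add: power2_eq_square mult_right_mono)
  with sq show "\<alpha> * ln x \<ge> 1/4" by linarith
qed

lemma mult_le_of_mult_le:
  fixes P a l m b :: real
  assumes "0 \<le> a" "0 \<le> b" "0 \<le> m" "m \<le> a * l" "P * l \<le> b"
  shows "m * P \<le> a * b"
proof (cases "P \<le> 0")
  case False
  then have "m * P \<le> (a * l) * P" using assms(4) by (intro mult_right_mono) auto
  also have "\<dots> = a * (P * l)" by simp
  also have "\<dots> \<le> a * b" using assms(1,5) by (intro mult_left_mono)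
  finally show ?thesis .
next
  case True
  then have "m * P \<le> 0" using assms(3) by (simp add: mult_nonneg_nonpos)
  also have "0 \<le> a * b" using assms(1,2) by simp
  finally show ?thesis .
qed

lemma exp_le_one_plus_square:
  fixes x :: real
  assumes "\<bar>x\<bar> \<le> 1"
  shows "exp x \<le> 1 + x + x\<^sup>2"
proof (cases "x \<ge> 0")
  case True
  then show ?thesis using assms exp_bound by auto
next
  case False
  have "exp x * (1 - x) \<le> exp x * exp (- x)"
    using exp_ge_add_one_self[of "- x"] by (intro mult_left_mono) auto
  also have "\<dots> = 1" by (simp add: exp_minus_inverse)
  also have "1 \<le> (1 + x + x\<^sup>2) * (1 - x)"
    using False mult_nonpos_nonneg[of x "x * x"] by (simp add: algebra_simps power2_eq_square)
  finally show ?thesis using False by simp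
qed

section \<open>Bernstein's inequality for reweighted Bernoulli sums\<close>

lemma bernoulli_reweighted_mgf_le:
  fixes p c \<theta> :: real
  assumes p: "0 < p" "p \<le> 1" and \<theta>: "0 \<le> \<theta>" and small: "\<theta> * \<bar>c\<bar> \<le> p"
  shows "p * exp (\<theta> * ((1 / p - 1) * c)) + (1 - p) * exp (\<theta> * (- c))
           \<le> exp (\<theta>\<^sup>2 * ((1 / p - 1) * c\<^sup>2))"
proof -
  have "\<theta> * \<bar>c\<bar> \<le> 1" using small p by linarith
  then have small_neg: "\<bar>\<theta> * (- c)\<bar> \<le> 1" using \<theta> by (simp add: abs_mult)
  have "\<bar>\<theta> * ((1 / p - 1) * c)\<bar> = \<theta> * (1 / p - 1) * \<bar>c\<bar>"
    using p \<theta> by (simp add: abs_mult)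
  also have "\<dots> = (1 - p) * (\<theta> * \<bar>c\<bar>) / p"
    using p by (simp add: field_simps)
  also have "\<dots> \<le> 1"
    using small p \<theta> mult_right_mono[of "1 - p" 1 "\<theta> * \<bar>c\<bar>"] by (simp add: divide_simps)
  finally have small_pos: "\<bar>\<theta> * ((1 / p - 1) * c)\<bar> \<le> 1" .
  have "p * exp (\<theta> * ((1 / p - 1) * c)) + (1 - p) * exp (\<theta> * (- c))
     \<le> p * (1 + \<theta> * ((1 / p - 1) * c) + (\<theta> * ((1 / p - 1) * c))\<^sup>2)
       + (1 - p) * (1 + \<theta> * (- c) + (\<theta> * (- c))\<^sup>2)"
    using p exp_le_one_plus_square[OF small_pos] exp_le_one_plus_square[OF small_neg]
    by (intro add_mono mult_left_mono) auto
  also have "\<dots> = 1 + \<theta>\<^sup>2 * ((1 / p - 1) * c\<^sup>2)"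
    using p by (simp add: field_simps power2_eq_square)
  also have "\<dots> \<le> exp (\<theta>\<^sup>2 * ((1 / p - 1) * c\<^sup>2))" by (rule exp_ge_add_one_self)
  finally show ?thesis .
qed

lemma finite_set_pmf_Pi_bernoulli:
  assumes "finite A"
  shows "finite (set_pmf (Pi_pmf A False (\<lambda>x. bernoulli_pmf (p x))))"
  by (rule finite_subset[OF set_Pi_pmf_subset'[OF assms]]) (use assms in \<open>auto intro: finite_PiE_dflt\<close>)

lemma bernoulli_pmf_1: "bernoulli_pmf 1 = return_pmf True"
  by (rule pmf_eqI) (simp split: split_indicator)

lemma prob_reweighted_bernoulli_sum_ge:
  fixes A :: "'a set" and p c :: "'a \<Rightarrow> real" and \<theta> t :: real
  assumes fin: "finite A" and p: "\<And>x. x \<in> A \<Longrightarrow> 0 < p x \<and> p x \<le> 1" and \<theta>: "\<theta> > 0"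
    and small: "\<And>x. x \<in> A \<Longrightarrow> \<theta> * \<bar>c x\<bar> \<le> p x"
  shows "measure_pmf.prob (Pi_pmf A False (\<lambda>x. bernoulli_pmf (p x)))
           {\<delta>. t \<le> (\<Sum>x\<in>A. ((if \<delta> x then 1 / p x else 0) - 1) * c x)}
         \<le> exp (\<theta>\<^sup>2 * (\<Sum>x\<in>A. (1 / p x - 1) * (c x)\<^sup>2) - \<theta> * t)"
proof -
  define Q where "Q = Pi_pmf A False (\<lambda>x. bernoulli_pmf (p x))"
  define g where "g x b = ((if b then 1 / p x else 0) - 1) * c x" for x b
  define S where "S = {\<delta>. t \<le> (\<Sum>x\<in>A. g x (\<delta> x))}"
  have int: "integrable (measure_pmf Q) f" for f :: "_ \<Rightarrow> real"
    unfolding Q_def by (rule integrable_measure_pmf_finite[OF finite_set_pmf_Pi_bernoulli[OF fin]])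
  have markov: "indicator S \<delta> \<le> exp (- \<theta> * t) * (\<Prod>x\<in>A. exp (\<theta> * g x (\<delta> x)))" for \<delta>
  proof -
    have "exp (- \<theta> * t) * (\<Prod>x\<in>A. exp (\<theta> * g x (\<delta> x))) = exp (\<theta> * ((\<Sum>x\<in>A. g x (\<delta> x)) - t))"
      using fin by (simp add: exp_sum[symmetric] sum_distrib_left exp_add[symmetric] algebra_simps)
    then show ?thesis using \<theta> by (auto simp: S_def indicator_def)
  qed
  have mgf: "measure_pmf.expectation (bernoulli_pmf (p x)) (\<lambda>b. exp (\<theta> * g x b))
               \<le> exp (\<theta>\<^sup>2 * ((1 / p x - 1) * (c x)\<^sup>2))" if x: "x \<in> A" for x
    using bernoulli_reweighted_mgf_le[of "p x" \<theta> "c x"] p[OF x] small[OF x] \<theta>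
    by (simp add: g_def algebra_simps)
  have factorize: "measure_pmf.expectation Q (\<lambda>\<delta>. \<Prod>x\<in>A. exp (\<theta> * g x (\<delta> x)))
      = (\<Prod>x\<in>A. measure_pmf.expectation (bernoulli_pmf (p x)) (\<lambda>b. exp (\<theta> * g x b)))"
    unfolding Q_def
    by (rule expectation_prod_Pi_pmf[OF fin]) (auto intro: integrable_measure_pmf_finite)
  have "measure_pmf.prob Q S = measure_pmf.expectation Q (indicator S)" by simp
  also have "\<dots> \<le> measure_pmf.expectation Q (\<lambda>\<delta>. exp (- \<theta> * t) * (\<Prod>x\<in>A. exp (\<theta> * g x (\<delta> x))))"
    by (intro integral_mono int markov)
  also have "\<dots> = exp (- \<theta> * t)
      * (\<Prod>x\<in>A. measure_pmf.expectation (bernoulli_pmf (p x)) (\<lambda>b. exp (\<theta> * g x b)))"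
    by (simp add: factorize)
  also have "\<dots> \<le> exp (- \<theta> * t) * (\<Prod>x\<in>A. exp (\<theta>\<^sup>2 * ((1 / p x - 1) * (c x)\<^sup>2)))"
    using mgf by (intro mult_left_mono prod_mono) auto
  also have "\<dots> = exp (\<theta>\<^sup>2 * (\<Sum>x\<in>A. (1 / p x - 1) * (c x)\<^sup>2) - \<theta> * t)"
    using fin by (simp add: exp_sum sum_distrib_left exp_diff exp_minus field_simps)
  finally show ?thesis by (simp add: Q_def S_def g_def)
qed

lemma bernstein_reweighted_bernoulli:
  fixes A :: "'a set" and p c :: "'a \<Rightarrow> real" and t b V G :: real
  assumes fin: "finite A" and p: "\<And>x. x \<in> A \<Longrightarrow> 0 < p x \<and> p x \<le> 1"
    and bound: "\<And>x. x \<in> A \<Longrightarrow> \<bar>c x\<bar> / p x \<le> b"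
    and var: "(\<Sum>x\<in>A. (1 / p x - 1) * (c x)\<^sup>2) \<le> V"
    and t: "t > 0" and G: "G > 0" and bt: "2 * b * G \<le> t" and Vt: "4 * G * V \<le> t\<^sup>2"
  shows "measure_pmf.prob (Pi_pmf A False (\<lambda>x. bernoulli_pmf (p x)))
           {\<delta>. t \<le> (\<Sum>x\<in>A. ((if \<delta> x then 1 / p x else 0) - 1) * c x)} \<le> exp (- G)"
proof -
  define \<theta> where "\<theta> = 2 * G / t"
  have \<theta>: "\<theta> > 0" using t G by (simp add: \<theta>_def)
  have small: "\<theta> * \<bar>c x\<bar> \<le> p x" if x: "x \<in> A" for x
  proof -
    have "\<theta> * (\<bar>c x\<bar> / p x) \<le> \<theta> * b" using bound[OF x] \<theta> by (intro mult_left_mono) auto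
    also have "\<dots> \<le> 1" using bt t by (simp add: \<theta>_def divide_simps mult_ac)
    finally show ?thesis using p[OF x] by (simp add: divide_simps)
  qed
  have "\<theta>\<^sup>2 * (\<Sum>x\<in>A. (1 / p x - 1) * (c x)\<^sup>2) \<le> \<theta>\<^sup>2 * V"
    using var by (intro mult_left_mono) auto
  also have "\<dots> = G * (4 * G * V) / t\<^sup>2" by (simp add: \<theta>_def power2_eq_square)
  also have "\<dots> \<le> G" using Vt G t by (simp add: divide_simps)
  finally have exponent: "\<theta>\<^sup>2 * (\<Sum>x\<in>A. (1 / p x - 1) * (c x)\<^sup>2) - \<theta> * t \<le> - G"
    using t by (simp add: \<theta>_def)
  show ?thesis
    using order.trans[OF prob_reweighted_bernoulli_sum_ge[OF fin p \<theta> small] exp_mono[OF exponent]]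
    by blast
qed

lemma half_le_Re_or_Im:
  fixes z :: complex
  assumes "t \<le> cmod z"
  shows "t / 2 \<le> Re z \<or> t / 2 \<le> - Re z \<or> t / 2 \<le> Im z \<or> t / 2 \<le> - Im z"
  using cmod_le[of z] assms by linarith

lemma bernstein_reweighted_bernoulli_complex:
  fixes A :: "'a set" and p :: "'a \<Rightarrow> real" and a :: "'a \<Rightarrow> complex" and t b V G :: real
  assumes fin: "finite A" and p: "\<And>x. x \<in> A \<Longrightarrow> 0 < p x \<and> p x \<le> 1"
    and bound: "\<And>x. x \<in> A \<Longrightarrow> cmod (a x) / p x \<le> b"
    and var: "(\<Sum>x\<in>A. (1 / p x - 1) * (cmod (a x))\<^sup>2) \<le> V"
    and t: "t > 0" and G: "G > 0" and bt: "4 * b * G \<le> t" and Vt: "16 * G * V \<le> t\<^sup>2"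
  shows "measure_pmf.prob (Pi_pmf A False (\<lambda>x. bernoulli_pmf (p x)))
           {\<delta>. t \<le> cmod (\<Sum>x\<in>A. complex_of_real ((if \<delta> x then 1 / p x else 0) - 1) * a x)}
         \<le> 4 * exp (- G)"
proof -
  define Q where "Q = Pi_pmf A False (\<lambda>x. bernoulli_pmf (p x))"
  define e where "e \<delta> x = (if \<delta> x then 1 / p x else 0) - (1::real)" for \<delta> x
  define T where "T c = {\<delta>. t / 2 \<le> (\<Sum>x\<in>A. e \<delta> x * c x)}" for c :: "'a \<Rightarrow> real"
  have tail: "measure_pmf.prob Q (T c) \<le> exp (- G)" if dom: "\<And>x. \<bar>c x\<bar> \<le> cmod (a x)" for c
    unfolding Q_def T_def e_def
  proof (rule bernstein_reweighted_bernoulli[OF fin p _ _ _ G])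
    show "\<bar>c x\<bar> / p x \<le> b" if x: "x \<in> A" for x
      using divide_right_mono[OF dom[of x], of "p x"] bound[OF x] p[OF x] by simp
    have "(1 / p x - 1) * (c x)\<^sup>2 \<le> (1 / p x - 1) * (cmod (a x))\<^sup>2" if x: "x \<in> A" for x
      using p[OF x] dom[of x] abs_le_square_iff[of "c x" "cmod (a x)"] by (intro mult_left_mono) auto
    then show "(\<Sum>x\<in>A. (1 / p x - 1) * (c x)\<^sup>2) \<le> V"
      by (intro order.trans[OF sum_mono var])
  qed (use t bt Vt in \<open>auto simp: power_divide\<close>)
  have cover: "{\<delta>. t \<le> cmod (\<Sum>x\<in>A. complex_of_real (e \<delta> x) * a x)}
      \<subseteq> T (\<lambda>x. Re (a x)) \<union> T (\<lambda>x. - Re (a x)) \<union> T (\<lambda>x. Im (a x)) \<union> T (\<lambda>x. - Im (a x))"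
    by (auto simp: T_def Re_sum Im_sum sum_negf dest!: half_le_Re_or_Im)
  have "measure_pmf.prob Q {\<delta>. t \<le> cmod (\<Sum>x\<in>A. complex_of_real (e \<delta> x) * a x)}
      \<le> measure_pmf.prob Q (T (\<lambda>x. Re (a x))) + measure_pmf.prob Q (T (\<lambda>x. - Re (a x)))
        + measure_pmf.prob Q (T (\<lambda>x. Im (a x))) + measure_pmf.prob Q (T (\<lambda>x. - Im (a x)))"
    by (rule order.trans[OF measure_pmf.finite_measure_mono[OF cover]])
       (auto intro!: order.trans[OF measure_Un_le] add_mono)
  also have "\<dots> \<le> 4 * exp (- G)"
    using tail[of "\<lambda>x. Re (a x)"] tail[of "\<lambda>x. - Re (a x)"] tail[of "\<lambda>x. Im (a x)"]
      tail[of "\<lambda>x. - Im (a x)"]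
    by (simp add: abs_Re_le_cmod abs_Im_le_cmod)
  finally show ?thesis by (simp add: Q_def e_def)
qed

lemma lev_boundary_mono:
  fixes A :: "nat \<Rightarrow> nat"
  assumes A0: "A 0 = 0" and inc: "\<forall>k\<in>{2..r}. A (k - 1) < A k" and "a \<le> b" "b \<le> r"
  shows "A a \<le> A b"
  using assms(3,4)
proof (induction b rule: dec_induct)
  case (step n)
  have "A n \<le> A (Suc n)"
    using A0 inc step by (cases "n = 0") (auto dest: bspec[of _ _ "Suc n"])
  with step show ?case by simp
qed simp

lemma lev_disjoint:
  fixes A :: "nat \<Rightarrow> nat"
  assumes A0: "A 0 = 0" and inc: "\<forall>k\<in>{2..r}. A (k - 1) < A k"
    and "k \<in> {1..r}" "k' \<in> {1..r}" "k \<noteq> k'"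
  shows "lev A k \<inter> lev A k' = {}"
proof -
  have "lev A k \<inter> lev A k' = {}" if "k < k'" "k' \<le> r" for k k'
  proof -
    have "A k \<le> A (k' - 1)" using lev_boundary_mono[OF A0 inc, of k "k' - 1"] that by simp
    then show ?thesis by (auto simp: lev_def)
  qed
  with assms(3-5) show ?thesis by (metis Int_commute atLeastAtMost_iff linorder_neqE_nat)
qed

lemma lev_cover:
  fixes A :: "nat \<Rightarrow> nat"
  assumes A0: "A 0 = 0" and i: "i < A r"
  obtains k where "k \<in> {1..r}" "i \<in> lev A k"
proof -
  define k where "k = (LEAST k. i < A k)"
  have ik: "i < A k" unfolding k_def by (rule LeastI[of _ r]) (rule i)
  have kr: "k \<le> r" unfolding k_def by (rule Least_le) (rule i)
  have k0: "k \<noteq> 0" using ik A0 by (intro notI) simp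
  have "\<not> i < A (k - 1)"
    using k0 not_less_Least[of "k - 1" "\<lambda>k. i < A k"] unfolding k_def by simp
  with ik kr k0 show ?thesis by (intro that[of k]) (auto simp: lev_def)
qed

lemma lessThan_eq_UN_lev:
  fixes A :: "nat \<Rightarrow> nat"
  assumes A0: "A 0 = 0" and inc: "\<forall>k\<in>{2..r}. A (k - 1) < A k"
  shows "{..<A r} = (\<Union>k\<in>{1..r}. lev A k)"
proof
  show "{..<A r} \<subseteq> (\<Union>k\<in>{1..r}. lev A k)"
  proof
    fix i assume "i \<in> {..<A r}"
    then obtain k where "k \<in> {1..r}" "i \<in> lev A k" using lev_cover[of A i r] A0 by auto
    then show "i \<in> (\<Union>k\<in>{1..r}. lev A k)" by blast
  qed
  show "(\<Union>k\<in>{1..r}. lev A k) \<subseteq> {..<A r}"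
    using lev_boundary_mono[OF A0 inc] by (fastforce simp: lev_def)
qed

lemma sum_lessThan_eq_sum_lev:
  fixes A :: "nat \<Rightarrow> nat" and f :: "nat \<Rightarrow> 'a::comm_monoid_add"
  assumes A0: "A 0 = 0" and inc: "\<forall>k\<in>{2..r}. A (k - 1) < A k"
  shows "(\<Sum>i<A r. f i) = (\<Sum>k=1..r. \<Sum>i\<in>lev A k. f i)"
  unfolding lessThan_eq_UN_lev[OF A0 inc]
proof (rule sum.UNION_disjoint)
  show "\<forall>k\<in>{1..r}. \<forall>k'\<in>{1..r}. k \<noteq> k' \<longrightarrow> lev A k \<inter> lev A k' = {}"
    using lev_disjoint[OF A0 inc] by blast
qed (auto simp: lev_def)

lemma norm_le_linfty:
  assumes "bdd_above (range (\<lambda>i. cmod (f i)))"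
  shows "cmod (f i) \<le> linfty f"
  unfolding linfty_def using assms by (rule cSUP_upper[OF UNIV_I])

lemma linfty_le:
  assumes "\<And>i. cmod (f i) \<le> B"
  shows "linfty f \<le> B"
  unfolding linfty_def using assms by (intro cSUP_least) auto

lemma linfty_zero [simp]: "linfty (\<lambda>_. 0) = 0"
  by (simp add: linfty_def)

lemma bdd_above_norm_finite_support:
  assumes "finite F" "\<And>i. i \<notin> F \<Longrightarrow> f i = 0"
  shows "bdd_above (range (\<lambda>i. cmod (f i)))"
proof (rule bdd_aboveI2)
  show "cmod (f i) \<le> (\<Sum>j\<in>F. cmod (f j))" for i
    using assms by (cases "i \<in> F") (auto intro: member_le_sum sum_nonneg)
qed

lemma ell2_bdd_above_norm:
  assumes "ell2 x"
  shows "bdd_above (range (\<lambda>i. cmod (x i)))"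
proof -
  have "(\<lambda>i. (cmod (x i))\<^sup>2) \<longlonglongrightarrow> 0"
    using assms unfolding ell2_def by (rule summable_LIMSEQ_zero)
  then obtain B where B: "\<And>i. (cmod (x i))\<^sup>2 \<le> B"
    by (metis Bseq_def convergentI convergent_imp_Bseq real_norm_def abs_le_D1)
  have "cmod (x i) \<le> max 1 B" for i
  proof (cases "cmod (x i) \<le> 1")
    case False
    then have "cmod (x i) \<le> (cmod (x i))\<^sup>2"
      using mult_left_mono[of 1 "cmod (x i)" "cmod (x i)"] by (simp add: power2_eq_square)
    then show ?thesis using B[of i] by simp
  qed simp
  then show ?thesis by (rule bdd_aboveI2)
qed

lemma ell2_linfty_nonneg: "ell2 x \<Longrightarrow> 0 \<le> linfty x"
  by (rule order.trans[OF norm_ge_zero norm_le_linfty[OF ell2_bdd_above_norm]])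

lemma ell2_linfty_le_0_imp_zero:
  assumes "ell2 x" "linfty x \<le> 0"
  shows "x i = 0"
  using norm_le_linfty[OF ell2_bdd_above_norm[OF assms(1)], of i] assms(2)
  by (metis norm_le_zero_iff order.trans)

section \<open>Isometries and vectors of full support\<close>

lemma isometry_summable_column_products:
  assumes "isometry_matrix u"
  shows "summable (\<lambda>k. cnj (u k i) * u k j)"
proof (rule summable_norm_cancel, rule summable_comparison_test)
  show "summable (\<lambda>k. ((cmod (u k i))\<^sup>2 + (cmod (u k j))\<^sup>2) / 2)"
    using assms by (intro summable_divide summable_add) (auto simp: isometry_matrix_def)
  have "norm (norm (cnj (u k i) * u k j)) \<le> ((cmod (u k i))\<^sup>2 + (cmod (u k j))\<^sup>2) / 2" for k
    using sum_squares_bound[of "cmod (u k i)" "cmod (u k j)"] by (simp add: norm_mult)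
  then show "\<exists>N. \<forall>k\<ge>N. norm (norm (cnj (u k i) * u k j)) \<le> ((cmod (u k i))\<^sup>2 + (cmod (u k j))\<^sup>2) / 2"
    by blast
qed

lemma isometry_column_norm:
  assumes "isometry_matrix u"
  shows "(\<Sum>k. (cmod (u k j))\<^sup>2) = 1"
proof -
  have "(\<lambda>k. cnj (u k j) * u k j) = (\<lambda>k. complex_of_real ((cmod (u k j))\<^sup>2))"
    by (rule ext) (metis complex_norm_square mult.commute)
  moreover have "(\<Sum>k. cnj (u k j) * u k j) = 1" "summable (\<lambda>k. (cmod (u k j))\<^sup>2)"
    using assms by (auto simp: isometry_matrix_def)
  ultimately show ?thesis by (metis of_real_eq_1_iff suminf_of_real)
qed

lemma isometry_entry_square_le_1:
  assumes "isometry_matrix u"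
  shows "(cmod (u i j))\<^sup>2 \<le> 1"
proof -
  have "(\<Sum>k\<in>{i}. (cmod (u k j))\<^sup>2) \<le> (\<Sum>k. (cmod (u k j))\<^sup>2)"
    using assms by (intro sum_le_suminf) (auto simp: isometry_matrix_def)
  then show ?thesis using isometry_column_norm[OF assms] by simp
qed

lemma isometry_partial_norm_le:
  fixes F :: "nat set" and \<eta> :: "nat \<Rightarrow> complex"
  assumes iso: "isometry_matrix u" and F: "finite F"
  shows "(\<Sum>k<N. (cmod (\<Sum>j\<in>F. u k j * \<eta> j))\<^sup>2) \<le> (\<Sum>j\<in>F. (cmod (\<eta> j))\<^sup>2)"
proof -
  define g where "g k = (cmod (\<Sum>j\<in>F. u k j * \<eta> j))\<^sup>2" for k
  define f where "f k = (\<Sum>j\<in>F. \<Sum>j'\<in>F. (cnj (\<eta> j) * \<eta> j') * (cnj (u k j) * u k j'))" for k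
  have f_eq: "f = (\<lambda>k. complex_of_real (g k))"
  proof
    fix k
    have "complex_of_real (g k) = cnj (\<Sum>j\<in>F. u k j * \<eta> j) * (\<Sum>j\<in>F. u k j * \<eta> j)"
      unfolding g_def by (metis complex_norm_square mult.commute)
    then show "f k = complex_of_real (g k)"
      by (simp add: f_def sum_distrib_left sum_distrib_right mult_ac)
  qed
  have summable: "summable (\<lambda>k. cnj (u k j) * u k j')" for j j'
    by (rule isometry_summable_column_products[OF iso])
  have "suminf f = (\<Sum>j\<in>F. \<Sum>j'\<in>F. (cnj (\<eta> j) * \<eta> j') * (\<Sum>k. cnj (u k j) * u k j'))"
    unfolding f_def
    by (simp add: suminf_sum summable summable_sum summable_mult suminf_mult)
  also have "\<dots> = (\<Sum>j\<in>F. \<Sum>j'\<in>F. (cnj (\<eta> j) * \<eta> j') * (if j = j' then 1 else 0))"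
    using iso by (simp add: isometry_matrix_def)
  also have "\<dots> = (\<Sum>j\<in>F. cnj (\<eta> j) * \<eta> j)"
    using F by (simp add: if_distrib cong: if_cong)
  also have "\<dots> = complex_of_real (\<Sum>j\<in>F. (cmod (\<eta> j))\<^sup>2)"
    unfolding of_real_sum by (intro sum.cong refl) (metis complex_norm_square mult.commute)
  finally have suminf_f: "suminf f = complex_of_real (\<Sum>j\<in>F. (cmod (\<eta> j))\<^sup>2)" .
  have summable_f: "summable f"
    unfolding f_def by (intro summable_sum summable_mult summable)
  then have "summable g"
    using summable_Re[of f] by (simp add: f_eq)
  moreover have "suminf g = (\<Sum>j\<in>F. (cmod (\<eta> j))\<^sup>2)"
    using Re_suminf[OF summable_f] suminf_f by (simp add: f_eq)
  ultimately have "(\<Sum>k<N. g k) \<le> (\<Sum>j\<in>F. (cmod (\<eta> j))\<^sup>2)"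
    using sum_le_suminf[of g "{..<N}"] by (auto simp: g_def)
  then show ?thesis by (simp add: g_def)
qed

text \<open>Perturbing the zero entries of \<open>\<eta>\<close> on \<open>S\<close> by \<open>\<plusminus>1\<close> keeps \<open>\<eta>\<close> in the unit ball, and midpoint
  convexity lets one of the two perturbations increase \<open>\<Phi>\<close>: this is why suprema over vectors of
  exact support size dominate those over vectors supported in a set of that size.\<close>

lemma exists_full_support_dominating:
  fixes \<Phi> :: "('a \<Rightarrow> complex) \<Rightarrow> real" and \<eta> :: "'a \<Rightarrow> complex"
  assumes unit: "\<And>j. cmod (\<eta> j) \<le> 1" and supp: "\<And>j. j \<notin> S \<Longrightarrow> \<eta> j = 0"
    and midpoint: "\<And>e. 2 * \<Phi> \<eta> \<le> \<Phi> (\<lambda>j. \<eta> j + e j) + \<Phi> (\<lambda>j. \<eta> j - e j)"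
  obtains \<eta>' where "\<forall>j. cmod (\<eta>' j) \<le> 1" "\<forall>j. \<eta>' j \<noteq> 0 \<longleftrightarrow> j \<in> S" "\<Phi> \<eta> \<le> \<Phi> \<eta>'"
proof -
  define e :: "'a \<Rightarrow> complex" where "e j = (if j \<in> S \<and> \<eta> j = 0 then 1 else 0)" for j
  have "\<Phi> \<eta> \<le> \<Phi> (\<lambda>j. \<eta> j + e j) \<or> \<Phi> \<eta> \<le> \<Phi> (\<lambda>j. \<eta> j - e j)"
    using midpoint[of e] by linarith
  then show ?thesis
  proof
    assume "\<Phi> \<eta> \<le> \<Phi> (\<lambda>j. \<eta> j + e j)"
    then show ?thesis using unit supp by (intro that) (auto simp: e_def)
  next
    assume "\<Phi> \<eta> \<le> \<Phi> (\<lambda>j. \<eta> j - e j)"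
    then show ?thesis using unit supp by (intro that) (auto simp: e_def)
  qed
qed

lemma norm_sum_midpoint_convex:
  fixes c :: "'a \<Rightarrow> complex"
  shows "2 * cmod (\<Sum>j\<in>F. c j * \<eta> j)
           \<le> cmod (\<Sum>j\<in>F. c j * (\<eta> j + e j)) + cmod (\<Sum>j\<in>F. c j * (\<eta> j - e j))"
proof -
  define X Y where "X = (\<Sum>j\<in>F. c j * \<eta> j)" and "Y = (\<Sum>j\<in>F. c j * e j)"
  have "(\<Sum>j\<in>F. c j * (\<eta> j + e j)) = X + Y" "(\<Sum>j\<in>F. c j * (\<eta> j - e j)) = X - Y"
    by (simp_all add: X_def Y_def algebra_simps sum.distrib sum_subtractf)
  moreover have "2 * cmod X \<le> cmod (X + Y) + cmod (X - Y)"
    using norm_triangle_ineq[of "X + Y" "X - Y"] by simp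
  ultimately show ?thesis by (simp add: X_def)
qed

lemma sum_norm_sum_square_midpoint_convex:
  fixes c :: "'b \<Rightarrow> 'a \<Rightarrow> complex"
  shows "2 * (\<Sum>i\<in>I. (cmod (\<Sum>j\<in>F. c i j * \<eta> j))\<^sup>2)
           \<le> (\<Sum>i\<in>I. (cmod (\<Sum>j\<in>F. c i j * (\<eta> j + e j)))\<^sup>2)
             + (\<Sum>i\<in>I. (cmod (\<Sum>j\<in>F. c i j * (\<eta> j - e j)))\<^sup>2)"
proof -
  have parallelogram: "2 * (cmod X)\<^sup>2 \<le> (cmod (X + Y))\<^sup>2 + (cmod (X - Y))\<^sup>2" for X Y :: complex
    unfolding cmod_power2 by (simp add: power2_eq_square algebra_simps)
  have "(\<Sum>i\<in>I. 2 * (cmod (\<Sum>j\<in>F. c i j * \<eta> j))\<^sup>2)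
      \<le> (\<Sum>i\<in>I. (cmod (\<Sum>j\<in>F. c i j * (\<eta> j + e j)))\<^sup>2
                  + (cmod (\<Sum>j\<in>F. c i j * (\<eta> j - e j)))\<^sup>2)"
  proof (rule sum_mono)
    fix i
    show "2 * (cmod (\<Sum>j\<in>F. c i j * \<eta> j))\<^sup>2
        \<le> (cmod (\<Sum>j\<in>F. c i j * (\<eta> j + e j)))\<^sup>2 + (cmod (\<Sum>j\<in>F. c i j * (\<eta> j - e j)))\<^sup>2"
      using parallelogram[of "\<Sum>j\<in>F. c i j * \<eta> j" "\<Sum>j\<in>F. c i j * e j"]
      by (simp add: algebra_simps sum.distrib sum_subtractf)
  qed
  then show ?thesis by (simp add: sum.distrib sum_distrib_left)
qed

locale multilevel_sampling =
  fixes u :: "nat \<Rightarrow> nat \<Rightarrow> complex" and r :: nat and Nv Mv mv sv :: "nat \<Rightarrow> nat"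
    and \<Delta> :: "nat set"
  assumes isometry: "isometry_matrix u" and r_pos: "r \<ge> 1"
    and Nv_0: "Nv 0 = 0" and Mv_0: "Mv 0 = 0" and Nv_1: "1 \<le> Nv 1"
    and Nv_increasing: "\<forall>k\<in>{2..r}. Nv (k - 1) < Nv k"
    and Mv_increasing: "\<forall>k\<in>{2..r}. Mv (k - 1) < Mv k"
    and mv_bounds: "\<forall>k\<in>{1..r}. 1 \<le> mv k \<and> mv k \<le> Nv k - Nv (k - 1)"
    and \<Delta>_subset: "\<Delta> \<subseteq> {..<Mv r}"
    and \<Delta>_card_lev: "\<forall>k\<in>{1..r}. card (\<Delta> \<inter> lev Mv k) = sv k"
    and sparsity_ge_3: "(\<Sum>k=1..r. sv k) \<ge> 3"
begin

abbreviation "N \<equiv> Nv r"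
abbreviation "M \<equiv> Mv r"
abbreviation "q \<equiv> qidx r Nv mv"
abbreviation "sparsity \<equiv> real (\<Sum>k=1..r. sv k)"
abbreviation "\<Lambda> \<equiv> Lambda u r Nv Mv mv sv"
abbreviation "\<Upsilon> \<equiv> Upsilon u r Nv Mv mv sv"

lemma finite_\<Delta>: "finite \<Delta>"
  using \<Delta>_subset finite_subset by blast

lemma card_\<Delta>: "card \<Delta> = (\<Sum>k=1..r. sv k)"
proof -
  have "\<Delta> = (\<Union>k\<in>{1..r}. \<Delta> \<inter> lev Mv k)"
    using \<Delta>_subset lessThan_eq_UN_lev[OF Mv_0 Mv_increasing] by blast
  also have "card \<dots> = (\<Sum>k=1..r. card (\<Delta> \<inter> lev Mv k))"
  proof (rule card_UN_disjoint)
    show "\<forall>k\<in>{1..r}. \<forall>k'\<in>{1..r}. k \<noteq> k' \<longrightarrow> \<Delta> \<inter> lev Mv k \<inter> (\<Delta> \<inter> lev Mv k') = {}"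
      using lev_disjoint[OF Mv_0 Mv_increasing] by blast
  qed (use finite_\<Delta> in auto)
  finally show ?thesis using \<Delta>_card_lev by simp
qed

lemma M_ge_3: "real M \<ge> 3"
  using card_mono[OF _ \<Delta>_subset] card_\<Delta> sparsity_ge_3 by simp

lemma qlev_ratio:
  assumes "k \<in> {1..r}"
  shows "0 < qlev Nv mv k" "qlev Nv mv k \<le> 1" "1 / qlev Nv mv k = ratio Nv mv k"
    "ratio Nv mv k \<ge> 1"
proof -
  define d where "d = Nv k - Nv (k - 1)"
  have "1 \<le> mv k" "mv k \<le> d" using mv_bounds assms by (auto simp: d_def)
  then have "1 \<le> real (mv k)" "real (mv k) \<le> real d" by simp_all
  then show "0 < qlev Nv mv k" "qlev Nv mv k \<le> 1" "1 / qlev Nv mv k = ratio Nv mv k"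
    "ratio Nv mv k \<ge> 1"
    unfolding qlev_def ratio_def d_def[symmetric] by (simp_all add: divide_simps)
qed

lemma qidx_eq_qlev:
  assumes k: "k \<in> {1..r}" and j: "j \<in> lev Nv k"
  shows "q j = qlev Nv mv k"
proof -
  have "q j = (\<Sum>k'=1..r. if k' = k then qlev Nv mv k' else 0)"
    unfolding qidx_def using lev_disjoint[OF Nv_0 Nv_increasing k] j by (intro sum.cong) auto
  with k show ?thesis by simp
qed

lemma q_pos_le_1:
  assumes "j < N"
  shows "0 < q j \<and> q j \<le> 1"
  using lev_cover[OF Nv_0 assms] qidx_eq_qlev qlev_ratio by metis

lemma Kmax_ge_1: "Kmax r Nv mv \<ge> 1"
proof -
  have "ratio Nv mv 1 \<le> Kmax r Nv mv" unfolding Kmax_def using r_pos by (intro Max_ge) auto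
  with qlev_ratio(4)[of 1] r_pos show ?thesis by simp
qed

lemma entry_square_le_mu_rows:
  assumes "k \<in> lev Nv l"
  shows "(cmod (u k i))\<^sup>2 \<le> mu_rows u Nv l"
  unfolding mu_rows_def
  by (rule cSup_upper) (use assms isometry_entry_square_le_1[OF isometry] in \<open>auto intro!: bdd_aboveI[of _ 1]\<close>)

lemma entry_square_le_mu_block:
  assumes "k \<in> lev Nv l" "i \<in> lev Mv l'"
  shows "(cmod (u k i))\<^sup>2 \<le> mu_block u Nv Mv l l'"
  unfolding mu_block_def
  by (rule cSup_upper) (use assms isometry_entry_square_le_1[OF isometry] in \<open>auto intro!: bdd_aboveI[of _ 1]\<close>)

lemma mu_block_nonneg: "0 \<le> mu_block u Nv Mv l l'"
  unfolding mu_block_def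
  by (rule cSup_upper2[of 0]) (use isometry_entry_square_le_1[OF isometry] in \<open>auto intro!: bdd_aboveI[of _ 1]\<close>)

lemma mu_block_le_mu_rows: "mu_block u Nv Mv l l' \<le> mu_rows u Nv l"
  unfolding mu_block_def mu_rows_def
  by (rule cSup_subset_mono) (use isometry_entry_square_le_1[OF isometry] in \<open>auto intro!: bdd_aboveI[of _ 1]\<close>)

lemma mu_rows_nonneg: "0 \<le> mu_rows u Nv l"
  using mu_block_nonneg mu_block_le_mu_rows order.trans by blast

lemma mu_block_le_muNM: "mu_block u Nv Mv l l' \<le> muNM u Nv Mv l l'"
proof -
  have "mu_block u Nv Mv l l' = sqrt (mu_block u Nv Mv l l' * mu_block u Nv Mv l l')"
    using mu_block_nonneg by simp
  also have "\<dots> \<le> muNM u Nv Mv l l'"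
    unfolding muNM_def using mu_block_nonneg mu_block_le_mu_rows
    by (intro real_sqrt_le_mono mult_left_mono)
  finally show ?thesis .
qed

lemma muNM_nonneg: "0 \<le> muNM u Nv Mv l l'"
  using mu_block_nonneg mu_block_le_muNM order.trans by blast

lemma full_support_in_Theta':
  assumes "\<forall>j. cmod (\<eta> j) \<le> 1" "\<forall>j. \<eta> j \<noteq> 0 \<longleftrightarrow> j \<in> \<Delta>"
  shows "\<eta> \<in> Theta' r Mv sv"
proof -
  have "{j \<in> lev Mv l. \<eta> j \<noteq> 0} = \<Delta> \<inter> lev Mv l" for l using assms(2) by auto
  moreover have "{j. Mv (r - 1) \<le> j \<and> \<eta> j \<noteq> 0} = \<Delta> \<inter> lev Mv r"
    using assms(2) \<Delta>_subset by (auto simp: lev_def)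
  ultimately show ?thesis unfolding Theta'_def using assms(1) \<Delta>_card_lev finite_\<Delta> r_pos by auto
qed

lemma full_support_in_Theta:
  assumes "\<forall>j. cmod (\<eta> j) \<le> 1" "\<forall>j. \<eta> j \<noteq> 0 \<longleftrightarrow> j \<in> \<Delta>"
  shows "\<eta> \<in> Theta r Mv sv"
proof -
  have "{j \<in> lev Mv l. \<eta> j \<noteq> 0} = \<Delta> \<inter> lev Mv l" for l using assms(2) by auto
  moreover have "\<forall>j. M \<le> j \<longrightarrow> \<eta> j = 0" using assms(2) \<Delta>_subset by force
  ultimately show ?thesis unfolding Theta_def using assms(1) \<Delta>_card_lev by auto
qed

section \<open>Coherence bounds\<close>

lemma norm_le_block_linf:
  assumes "k \<in> lev Nv l"
  shows "cmod (\<Sum>j\<in>lev Mv l'. u k j * \<eta> j) \<le> block_linf u Nv Mv l l' \<eta>"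
proof -
  have "cmod (if k \<in> lev Nv l then \<Sum>j\<in>lev Mv l'. u k j * \<eta> j else 0) \<le> block_linf u Nv Mv l l' \<eta>"
    unfolding block_linf_def
    by (rule norm_le_linfty, rule bdd_above_norm_finite_support[of "lev Nv l"]) (auto simp: lev_def)
  with assms show ?thesis by simp
qed

lemma block_linf_le:
  assumes "\<forall>j. cmod (\<eta> j) \<le> 1"
  shows "block_linf u Nv Mv l l' \<eta> \<le> (\<Sum>i\<in>lev Nv l. \<Sum>j\<in>lev Mv l'. cmod (u i j))"
  unfolding block_linf_def
proof (rule linfty_le)
  fix i
  have "cmod (\<Sum>j\<in>lev Mv l'. u i j * \<eta> j) \<le> (\<Sum>j\<in>lev Mv l'. cmod (u i j))"
    using assms by (intro order.trans[OF norm_sum] sum_mono) (simp add: norm_mult mult_left_le)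
  also have "\<dots> \<le> (\<Sum>i\<in>lev Nv l. \<Sum>j\<in>lev Mv l'. cmod (u i j))" if "i \<in> lev Nv l"
    using that by (intro member_le_sum[of i]) (auto intro: sum_nonneg simp: lev_def)
  finally show "cmod (if i \<in> lev Nv l then \<Sum>j\<in>lev Mv l'. u i j * \<eta> j else 0)
      \<le> (\<Sum>i\<in>lev Nv l. \<Sum>j\<in>lev Mv l'. cmod (u i j))"
    by (auto intro!: sum_nonneg)
qed

lemma norm_lev_sum_le_SUP_block_linf:
  assumes k: "k \<in> lev Nv l" and unit: "\<And>j. cmod (\<eta> j) \<le> 1" and supp: "\<And>j. j \<notin> \<Delta> \<Longrightarrow> \<eta> j = 0"
  shows "cmod (\<Sum>j\<in>lev Mv l'. u k j * \<eta> j) \<le> (SUP \<zeta>\<in>Theta' r Mv sv. block_linf u Nv Mv l l' \<zeta>)"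
proof -
  obtain \<eta>' where \<eta>': "\<forall>j. cmod (\<eta>' j) \<le> 1" "\<forall>j. \<eta>' j \<noteq> 0 \<longleftrightarrow> j \<in> \<Delta>"
    "cmod (\<Sum>j\<in>lev Mv l'. u k j * \<eta> j) \<le> cmod (\<Sum>j\<in>lev Mv l'. u k j * \<eta>' j)"
    using exists_full_support_dominating[of \<eta> \<Delta> "\<lambda>\<zeta>. cmod (\<Sum>j\<in>lev Mv l'. u k j * \<zeta> j)",
        OF unit supp norm_sum_midpoint_convex]
    by blast
  have "bdd_above (block_linf u Nv Mv l l' ` Theta' r Mv sv)"
    using block_linf_le by (intro bdd_aboveI2) (auto simp: Theta'_def)
  then have "block_linf u Nv Mv l l' \<eta>' \<le> (SUP \<zeta>\<in>Theta' r Mv sv. block_linf u Nv Mv l l' \<zeta>)"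
    using full_support_in_Theta'[OF \<eta>'(1,2)] by (rule cSUP_upper[rotated])
  with \<eta>'(3) norm_le_block_linf[OF k] show ?thesis by (meson order.trans)
qed

text \<open>The \<open>k\<close>-th summand of \<open>(P\<^sub>\<Delta> U\<^sup>* P\<^sub>N U P\<^sub>\<Delta> \<xi>)\<^sub>i\<close>.\<close>

definition cross_term :: "(nat \<Rightarrow> complex) \<Rightarrow> nat \<Rightarrow> nat \<Rightarrow> complex" where
  "cross_term \<xi> i k = cnj (u k i) * (\<Sum>j\<in>\<Delta>. u k j * \<xi> j)"

lemma cross_term_divide: "cross_term (\<lambda>j. \<xi> j / c) i k = cross_term \<xi> i k / c"
  by (simp add: cross_term_def flip: sum_divide_distrib)

lemma sum_\<Delta>_eq_sum_lessThan:
  fixes f :: "nat \<Rightarrow> complex"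
  shows "(\<Sum>j\<in>\<Delta>. f j * \<xi> j) = (\<Sum>j<M. f j * (if j \<in> \<Delta> then \<xi> j else 0))"
  using \<Delta>_subset by (intro sum.mono_neutral_cong_left) auto

lemma sum_\<Delta>_eq_sum_lev:
  fixes f :: "nat \<Rightarrow> complex"
  shows "(\<Sum>j\<in>\<Delta>. f j * \<xi> j) = (\<Sum>l=1..r. \<Sum>j\<in>lev Mv l. f j * (if j \<in> \<Delta> then \<xi> j else 0))"
  unfolding sum_\<Delta>_eq_sum_lessThan by (rule sum_lessThan_eq_sum_lev[OF Mv_0 Mv_increasing])

lemma cross_term_le_Lambda:
  assumes k: "k < N" and unit: "\<And>j. cmod (\<xi> j) \<le> 1"
  shows "cmod (cross_term \<xi> i k) / q k \<le> \<Lambda>"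
proof -
  obtain l where l: "l \<in> {1..r}" "k \<in> lev Nv l" using lev_cover[OF Nv_0 k] by blast
  define SB where "SB l' = (SUP \<zeta>\<in>Theta' r Mv sv. block_linf u Nv Mv l l' \<zeta>)" for l'
  have "cmod (\<Sum>j\<in>\<Delta>. u k j * \<xi> j) \<le> (\<Sum>l'=1..r. cmod (\<Sum>j\<in>lev Mv l'. u k j * (if j \<in> \<Delta> then \<xi> j else 0)))"
    unfolding sum_\<Delta>_eq_sum_lev by (rule norm_sum)
  also have "\<dots> \<le> (\<Sum>l'=1..r. SB l')"
    unfolding SB_def using unit
    by (intro sum_mono norm_lev_sum_le_SUP_block_linf[OF l(2)]) auto
  finally have row: "cmod (\<Sum>j\<in>\<Delta>. u k j * \<xi> j) \<le> (\<Sum>l'=1..r. SB l')" .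
  have entry: "cmod (u k i) \<le> sqrt (mu_rows u Nv l)"
    using entry_square_le_mu_rows[OF l(2)] real_le_rsqrt by blast
  have "cmod (cross_term \<xi> i k) \<le> sqrt (mu_rows u Nv l) * (\<Sum>l'=1..r. SB l')"
    unfolding cross_term_def norm_mult complex_mod_cnj
    by (intro mult_mono entry row) (auto simp: mu_rows_nonneg)
  also have "\<dots> = (\<Sum>l'=1..r. kappaNM u r Nv Mv sv l l')"
    by (simp add: kappaNM_def SB_def sum_distrib_left mult_ac)
  finally have "cmod (cross_term \<xi> i k) / q k \<le> ratio Nv mv l * (\<Sum>l'=1..r. kappaNM u r Nv Mv sv l l')"
    using qidx_eq_qlev[OF l] qlev_ratio[OF l(1)]
    by (metis divide_right_mono less_eq_real_def mult.commute times_divide_eq_right mult_1)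
  also have "\<dots> \<le> \<Lambda>" unfolding Lambda_def using l(1) by (intro Max_ge) auto
  finally show ?thesis .
qed

lemma le_Sk:
  assumes "\<eta> \<in> Theta r Mv sv"
  shows "(\<Sum>i\<in>lev Nv l. (cmod (\<Sum>j<M. u i j * \<eta> j))\<^sup>2) \<le> Sk u r Nv Mv sv l"
  unfolding Sk_def
proof (rule cSUP_upper[OF assms], rule bdd_aboveI2)
  fix \<zeta> assume "\<zeta> \<in> Theta r Mv sv"
  then have unit: "cmod (\<zeta> j) \<le> 1" for j by (auto simp: Theta_def)
  have "cmod (\<Sum>j<M. u i j * \<zeta> j) \<le> (\<Sum>j<M. cmod (u i j))" for i
    using unit by (intro order.trans[OF norm_sum] sum_mono) (simp add: norm_mult mult_left_le)
  then show "(\<Sum>i\<in>lev Nv l. (cmod (\<Sum>j<M. u i j * \<zeta> j))\<^sup>2) \<le> (\<Sum>i\<in>lev Nv l. (\<Sum>j<M. cmod (u i j))\<^sup>2)"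
    by (intro sum_mono power_mono) auto
qed

lemma le_Upsilon:
  assumes t: "\<forall>k\<in>{1..r}. 0 \<le> t k \<and> t k \<le> Sk u r Nv Mv sv k"
    and t_sum: "(\<Sum>k=1..r. t k) \<le> sparsity" and l: "l \<in> {1..r}"
  shows "(\<Sum>k=1..r. (ratio Nv mv k - 1) * muNM u Nv Mv k l * t k) \<le> \<Upsilon>"
proof -
  define F where "F t l = (\<Sum>k=1..r. (ratio Nv mv k - 1) * muNM u Nv Mv k l * t k)" for t l
  define B where "B = (\<Sum>l'=1..r. \<bar>F (Sk u r Nv Mv sv) l'\<bar>)"
  have F_le_B: "F t' l' \<le> B"
    if t': "\<forall>k\<in>{1..r}. 0 \<le> t' k \<and> t' k \<le> Sk u r Nv Mv sv k" and l': "l' \<in> {1..r}" for t' l'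
  proof -
    have "F t' l' \<le> F (Sk u r Nv Mv sv) l'"
      unfolding F_def using t' qlev_ratio(4) muNM_nonneg by (intro sum_mono mult_left_mono) auto
    also have "\<dots> \<le> \<bar>F (Sk u r Nv Mv sv) l'\<bar>" by simp
    also have "\<dots> \<le> B" unfolding B_def using l' by (intro member_le_sum) auto
    finally show ?thesis .
  qed
  define S where "S = {Max ((\<lambda>l. F t l) ` {1..r}) | t. (\<forall>k\<in>{1..r}. 0 \<le> t k \<and> t k \<le> Sk u r Nv Mv sv k)
    \<and> (\<Sum>k=1..r. t k) \<le> sparsity}"
  have "Max ((\<lambda>l. F t l) ` {1..r}) \<in> S" unfolding S_def using t t_sum by blast
  moreover have "bdd_above S"
    unfolding S_def using F_le_B r_pos by (intro bdd_aboveI[of _ B]) (auto simp: Max_le_iff)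
  ultimately have "Max ((\<lambda>l. F t l) ` {1..r}) \<le> \<Upsilon>"
    unfolding Upsilon_def F_def[symmetric] S_def[symmetric] by (rule cSup_upper)
  moreover have "F t l \<le> Max ((\<lambda>l. F t l) ` {1..r})" using l by (intro Max_ge) auto
  ultimately show ?thesis by (simp add: F_def)
qed

lemma level_energy_le_Sk:
  assumes unit: "\<And>j. cmod (\<eta> j) \<le> 1" and supp: "\<And>j. j \<notin> \<Delta> \<Longrightarrow> \<eta> j = 0"
  shows "(\<Sum>k\<in>lev Nv l. (cmod (\<Sum>j<M. u k j * \<eta> j))\<^sup>2) \<le> Sk u r Nv Mv sv l"
proof -
  obtain \<eta>' where \<eta>': "\<forall>j. cmod (\<eta>' j) \<le> 1" "\<forall>j. \<eta>' j \<noteq> 0 \<longleftrightarrow> j \<in> \<Delta>"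
    "(\<Sum>k\<in>lev Nv l. (cmod (\<Sum>j<M. u k j * \<eta> j))\<^sup>2) \<le> (\<Sum>k\<in>lev Nv l. (cmod (\<Sum>j<M. u k j * \<eta>' j))\<^sup>2)"
    using exists_full_support_dominating[of \<eta> \<Delta> "\<lambda>\<zeta>. \<Sum>k\<in>lev Nv l. (cmod (\<Sum>j<M. u k j * \<zeta> j))\<^sup>2",
        OF unit supp sum_norm_sum_square_midpoint_convex]
    by blast
  from \<eta>'(3) le_Sk[OF full_support_in_Theta[OF \<eta>'(1,2)], of l] show ?thesis by (rule order.trans)
qed

lemma energy_le_sparsity:
  assumes unit: "\<And>j. cmod (\<eta> j) \<le> 1" and supp: "\<And>j. j \<notin> \<Delta> \<Longrightarrow> \<eta> j = 0"
  shows "(\<Sum>k<N. (cmod (\<Sum>j<M. u k j * \<eta> j))\<^sup>2) \<le> sparsity"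
proof -
  have "(\<Sum>k<N. (cmod (\<Sum>j<M. u k j * \<eta> j))\<^sup>2) \<le> (\<Sum>j<M. (cmod (\<eta> j))\<^sup>2)"
    by (rule isometry_partial_norm_le[OF isometry]) simp
  also have "\<dots> \<le> (\<Sum>j<M. if j \<in> \<Delta> then 1 else 0)"
    using unit supp by (intro sum_mono) (auto simp: abs_square_le_1)
  also have "\<dots> = sparsity"
    using \<Delta>_subset card_\<Delta> by (simp add: sum.If_cases Int_absorb1)
  finally show ?thesis .
qed

lemma variance_le_Upsilon:
  assumes i: "i \<in> \<Delta>" and unit: "\<And>j. cmod (\<xi> j) \<le> 1"
  shows "(\<Sum>k<N. (1 / q k - 1) * (cmod (cross_term \<xi> i k))\<^sup>2) \<le> \<Upsilon>"
proof -
  define \<eta> where "\<eta> j = (if j \<in> \<Delta> then \<xi> j else 0)" for j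
  define w where "w k = (\<Sum>j<M. u k j * \<eta> j)" for k
  define T where "T l = (\<Sum>k\<in>lev Nv l. (cmod (w k))\<^sup>2)" for l
  have \<eta>_unit: "cmod (\<eta> j) \<le> 1" and \<eta>_supp: "j \<notin> \<Delta> \<Longrightarrow> \<eta> j = 0" for j
    using unit by (auto simp: \<eta>_def)
  obtain l0 where l0: "l0 \<in> {1..r}" "i \<in> lev Mv l0"
    using lev_cover[where A = Mv, OF Mv_0] i \<Delta>_subset by blast
  have w: "cross_term \<xi> i k = cnj (u k i) * w k" for k
    unfolding cross_term_def w_def \<eta>_def sum_\<Delta>_eq_sum_lessThan ..
  have term_le: "(1 / q k - 1) * (cmod (cross_term \<xi> i k))\<^sup>2
      \<le> (ratio Nv mv l - 1) * muNM u Nv Mv l l0 * (cmod (w k))\<^sup>2"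
    if l: "l \<in> {1..r}" "k \<in> lev Nv l" for l k
  proof -
    have "(cmod (u k i))\<^sup>2 \<le> muNM u Nv Mv l l0"
      using entry_square_le_mu_block[OF l(2) l0(2)] mu_block_le_muNM by (rule order.trans)
    then have "(cmod (cross_term \<xi> i k))\<^sup>2 \<le> muNM u Nv Mv l l0 * (cmod (w k))\<^sup>2"
      by (simp add: w norm_mult power_mult_distrib mult_right_mono)
    moreover have "1 / q k - 1 = ratio Nv mv l - 1" "0 \<le> ratio Nv mv l - 1"
      using qidx_eq_qlev[OF l] qlev_ratio[OF l(1)] by auto
    ultimately show ?thesis by (metis mult.assoc mult_left_mono)
  qed
  have "(\<Sum>k<N. (1 / q k - 1) * (cmod (cross_term \<xi> i k))\<^sup>2)
     = (\<Sum>l=1..r. \<Sum>k\<in>lev Nv l. (1 / q k - 1) * (cmod (cross_term \<xi> i k))\<^sup>2)"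
    by (rule sum_lessThan_eq_sum_lev[OF Nv_0 Nv_increasing])
  also have "\<dots> \<le> (\<Sum>l=1..r. (ratio Nv mv l - 1) * muNM u Nv Mv l l0 * T l)"
    unfolding T_def sum_distrib_left using term_le by (intro sum_mono) auto
  also have "\<dots> \<le> \<Upsilon>"
  proof (rule le_Upsilon[OF _ _ l0(1)])
    show "\<forall>l\<in>{1..r}. 0 \<le> T l \<and> T l \<le> Sk u r Nv Mv sv l"
      using level_energy_le_Sk[OF \<eta>_unit \<eta>_supp] by (auto simp: T_def w_def intro: sum_nonneg)
    show "(\<Sum>l=1..r. T l) \<le> sparsity"
      using energy_le_sparsity[OF \<eta>_unit \<eta>_supp]
      unfolding T_def w_def sum_lessThan_eq_sum_lev[OF Nv_0 Nv_increasing] .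
  qed
  finally show ?thesis .
qed

lemma Lambda_nonneg: "0 \<le> \<Lambda>"
proof -
  have "0 < N" using Nv_1 lev_boundary_mono[OF Nv_0 Nv_increasing, of 1 r] r_pos by simp
  then show ?thesis using cross_term_le_Lambda[of 0 "\<lambda>_. 0"] by (simp add: cross_term_def)
qed

lemma Upsilon_nonneg: "0 \<le> \<Upsilon>"
proof -
  obtain i where "i \<in> \<Delta>" using card_\<Delta> sparsity_ge_3 by fastforce
  then show ?thesis using variance_le_Upsilon[of i "\<lambda>_. 0"] by (simp add: cross_term_def)
qed

lemma cross_term_le_Lambda_linfty:
  assumes \<xi>: "ell2 \<xi>" and k: "k < N"
  shows "cmod (cross_term \<xi> i k) / q k \<le> \<Lambda> * linfty \<xi>"
proof (cases "linfty \<xi> > 0")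
  case True
  have "cmod (cross_term \<xi> i k) / q k
      = linfty \<xi> * (cmod (cross_term (\<lambda>j. \<xi> j / linfty \<xi>) i k) / q k)"
    using True by (simp add: cross_term_divide norm_divide)
  also have "\<dots> \<le> linfty \<xi> * \<Lambda>"
    using norm_le_linfty[OF ell2_bdd_above_norm[OF \<xi>]] True
    by (intro mult_left_mono cross_term_le_Lambda[OF k]) (auto simp: norm_divide)
  finally show ?thesis by (simp add: mult.commute)
next
  case False
  then have "\<xi> = (\<lambda>_. 0)" using ell2_linfty_le_0_imp_zero[OF \<xi>] by fastforce
  then show ?thesis by (simp add: cross_term_def)
qed

lemma variance_le_Upsilon_linfty:
  assumes \<xi>: "ell2 \<xi>" and i: "i \<in> \<Delta>"
  shows "(\<Sum>k<N. (1 / q k - 1) * (cmod (cross_term \<xi> i k))\<^sup>2) \<le> \<Upsilon> * (linfty \<xi>)\<^sup>2"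
proof (cases "linfty \<xi> > 0")
  case True
  have "(\<Sum>k<N. (1 / q k - 1) * (cmod (cross_term (\<lambda>j. \<xi> j / linfty \<xi>) i k))\<^sup>2) \<le> \<Upsilon>"
    using norm_le_linfty[OF ell2_bdd_above_norm[OF \<xi>]] True
    by (intro variance_le_Upsilon[OF i]) (simp add: norm_divide)
  then show ?thesis
    using True by (simp add: cross_term_divide norm_divide power_divide divide_simps flip: sum_divide_distrib)
next
  case False
  then have "\<xi> = (\<lambda>_. 0)" using ell2_linfty_le_0_imp_zero[OF \<xi>] by fastforce
  then show ?thesis by (simp add: cross_term_def)
qed

section \<open>The error probability\<close>

text \<open>\<open>(P\<^sub>M U\<^sup>* P\<^sub>N U P\<^sub>M - P\<^sub>M) y\<close>, the operator measured by \<open>balance_opnorm\<close>.\<close>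

definition gram_defect :: "(nat \<Rightarrow> complex) \<Rightarrow> nat \<Rightarrow> complex" where
  "gram_defect y i = (if i < M then
     \<Sum>j<M. ((\<Sum>k<N. cnj (u k i) * u k j) - (if i = j then 1 else 0)) * y j else 0)"

lemma norm_gram_defect_le_balance_opnorm:
  assumes y: "\<forall>j. cmod (y j) \<le> 1"
  shows "cmod (gram_defect y i) \<le> balance_opnorm u N M"
proof -
  define B where "B = (\<Sum>i<M. \<Sum>j<M. cmod ((\<Sum>k<N. cnj (u k i) * u k j) - (if i = j then 1 else 0)))"
  have bound: "cmod (gram_defect y' i') \<le> B" if y': "\<forall>j. cmod (y' j) \<le> 1" for y' i'
  proof (cases "i' < M")
    case True
    have "cmod (gram_defect y' i')
        \<le> (\<Sum>j<M. cmod ((\<Sum>k<N. cnj (u k i') * u k j) - (if i' = j then 1 else 0)))"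
      unfolding gram_defect_def using True y'
      by (simp, intro order.trans[OF norm_sum] sum_mono) (simp add: norm_mult mult_left_le)
    also have "\<dots> \<le> B" unfolding B_def using True by (intro member_le_sum[of i'] sum_nonneg) auto
    finally show ?thesis .
  qed (simp add: gram_defect_def B_def sum_nonneg)
  have "cmod (gram_defect y i) \<le> linfty (gram_defect y)"
    using y bound by (intro norm_le_linfty bdd_aboveI2) blast
  also have "\<dots> \<le> Sup {linfty (gram_defect y) | y. \<forall>j. cmod (y j) \<le> 1}"
  proof (rule cSup_upper)
    show "bdd_above {linfty (gram_defect y) | y. \<forall>j. cmod (y j) \<le> 1}"
      using bound by (intro bdd_aboveI) (auto intro!: linfty_le)
  qed (use y in blast)
  also have "\<dots> = balance_opnorm u N M"
    by (simp only: balance_opnorm_def gram_defect_def[abs_def])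
  finally show ?thesis .
qed

lemma bias_eq_gram_defect:
  assumes i: "i \<in> \<Delta>"
  shows "(\<Sum>k<N. cross_term \<xi> i k) - \<xi> i = gram_defect (\<lambda>j. if j \<in> \<Delta> then \<xi> j else 0) i"
proof -
  define x where "x j = (if j \<in> \<Delta> then \<xi> j else 0)" for j
  have iM: "i < M" using i \<Delta>_subset by auto
  have "(\<Sum>k<N. cross_term \<xi> i k) = (\<Sum>j\<in>\<Delta>. (\<Sum>k<N. cnj (u k i) * u k j) * \<xi> j)"
    unfolding cross_term_def
    by (simp add: sum_distrib_left sum_distrib_right mult_ac sum.swap[of _ "{..<N}"])
  also have "\<dots> = (\<Sum>j<M. (\<Sum>k<N. cnj (u k i) * u k j) * x j)"
    unfolding x_def by (rule sum_\<Delta>_eq_sum_lessThan)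
  finally have gram: "(\<Sum>k<N. cross_term \<xi> i k) = (\<Sum>j<M. (\<Sum>k<N. cnj (u k i) * u k j) * x j)" .
  have "(\<Sum>j<M. (if i = j then 1 else 0) * x j) = (\<Sum>j<M. if i = j then x j else 0)"
    by (intro sum.cong) auto
  then have diagonal: "(\<Sum>j<M. (if i = j then 1 else 0) * x j) = \<xi> i"
    using iM i by (simp add: x_def)
  show ?thesis
    using gram diagonal iM
    by (simp add: gram_defect_def x_def[abs_def, symmetric] left_diff_distrib sum_subtractf)
qed

lemma norm_bias_le:
  assumes \<xi>: "ell2 \<xi>" and i: "i \<in> \<Delta>"
  shows "cmod ((\<Sum>k<N. cross_term \<xi> i k) - \<xi> i) \<le> balance_opnorm u N M * linfty \<xi>"
proof (cases "linfty \<xi> > 0")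
  case True
  have "cmod ((\<Sum>k<N. cross_term (\<lambda>j. \<xi> j / linfty \<xi>) i k) - \<xi> i / linfty \<xi>) \<le> balance_opnorm u N M"
    unfolding bias_eq_gram_defect[OF i, where \<xi> = "\<lambda>j. \<xi> j / linfty \<xi>"] using norm_le_linfty[OF ell2_bdd_above_norm[OF \<xi>]] True
    by (intro norm_gram_defect_le_balance_opnorm) (simp add: norm_divide)
  then show ?thesis
    using True by (simp add: cross_term_divide norm_divide divide_simps flip: sum_divide_distrib diff_divide_distrib)
next
  case False
  then have "\<xi> = (\<lambda>_. 0)" using ell2_linfty_le_0_imp_zero[OF \<xi>] by fastforce
  then show ?thesis by (simp add: cross_term_def)
qed

text \<open>The random part \<open>(P\<^sub>\<Delta> U\<^sup>* (D - P\<^sub>N) U P\<^sub>\<Delta> \<xi>)\<^sub>i\<close> of the error.\<close>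

definition fluctuation :: "(nat \<Rightarrow> complex) \<Rightarrow> nat \<Rightarrow> (nat \<Rightarrow> bool) \<Rightarrow> complex" where
  "fluctuation \<xi> i \<delta> = (\<Sum>k<N. complex_of_real ((if \<delta> k then 1 / q k else 0) - 1) * cross_term \<xi> i k)"

lemma err_vec_eq_fluctuation_plus_bias:
  assumes "i \<in> \<Delta>"
  shows "err_vec u r Nv mv \<Delta> \<delta> \<xi> i = fluctuation \<xi> i \<delta> + ((\<Sum>k<N. cross_term \<xi> i k) - \<xi> i)"
proof -
  have "{k. k < N \<and> \<delta> k} = {k \<in> {..<N}. \<delta> k}" by auto
  then have "(\<Sum>k\<in>{k. k < N \<and> \<delta> k}. cnj (u k i) * (complex_of_real (inverse (q k)) * (\<Sum>j\<in>\<Delta>. u k j * \<xi> j)))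
      = (\<Sum>k<N. if \<delta> k then cnj (u k i) * (complex_of_real (inverse (q k)) * (\<Sum>j\<in>\<Delta>. u k j * \<xi> j)) else 0)"
    by (simp only: sum.inter_filter finite_lessThan)
  also have "\<dots> = (\<Sum>k<N. complex_of_real ((if \<delta> k then 1 / q k else 0) - 1) * cross_term \<xi> i k
      + cross_term \<xi> i k)"
    by (intro sum.cong refl) (auto simp: cross_term_def algebra_simps divide_inverse)
  finally show ?thesis using assms by (simp add: err_vec_def fluctuation_def sum.distrib)
qed

lemma prob_fluctuation_ge_le:
  assumes \<xi>: "ell2 \<xi>" and i: "i \<in> \<Delta>" and t: "t > 0" and G: "G > 0"
    and \<Lambda>_small: "4 * (\<Lambda> * linfty \<xi>) * G \<le> t"
    and \<Upsilon>_small: "16 * G * (\<Upsilon> * (linfty \<xi>)\<^sup>2) \<le> t\<^sup>2"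
  shows "measure_pmf.prob (bernoulli_scheme r Nv mv) {\<delta>. t \<le> cmod (fluctuation \<xi> i \<delta>)} \<le> 4 * exp (- G)"
  unfolding bernoulli_scheme_def fluctuation_def
  by (rule bernstein_reweighted_bernoulli_complex[OF _ _ _ variance_le_Upsilon_linfty[OF \<xi> i] t G
        \<Lambda>_small \<Upsilon>_small])
     (auto simp: q_pos_le_1 cross_term_le_Lambda_linfty[OF \<xi>])

lemma error_event_subset:
  assumes \<xi>: "ell2 \<xi>" and bal: "balance_opnorm u N M \<le> \<beta>" and c: "0 \<le> c"
  shows "{\<delta>. linfty (err_vec u r Nv mv \<Delta> \<delta> \<xi>) > c * linfty \<xi>}
           \<subseteq> (\<Union>i\<in>\<Delta>. {\<delta>. (c - \<beta>) * linfty \<xi> \<le> cmod (fluctuation \<xi> i \<delta>)})"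
proof
  fix \<delta> assume "\<delta> \<in> {\<delta>. linfty (err_vec u r Nv mv \<Delta> \<delta> \<xi>) > c * linfty \<xi>}"
  then have large: "linfty (err_vec u r Nv mv \<Delta> \<delta> \<xi>) > c * linfty \<xi>" by simp
  have L: "0 \<le> linfty \<xi>" using ell2_linfty_nonneg[OF \<xi>] .
  have "\<exists>i\<in>\<Delta>. cmod (err_vec u r Nv mv \<Delta> \<delta> \<xi> i) > c * linfty \<xi>"
  proof (rule ccontr)
    assume "\<not> ?thesis"
    then have "cmod (err_vec u r Nv mv \<Delta> \<delta> \<xi> i) \<le> c * linfty \<xi>" for i
      using c L by (cases "i \<in> \<Delta>") (auto simp: err_vec_def not_less)
    then show False using linfty_le large by (metis not_less)
  qed
  then obtain i where i: "i \<in> \<Delta>" "cmod (err_vec u r Nv mv \<Delta> \<delta> \<xi> i) > c * linfty \<xi>" ..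
  have "cmod (err_vec u r Nv mv \<Delta> \<delta> \<xi> i)
      \<le> cmod (fluctuation \<xi> i \<delta>) + cmod ((\<Sum>k<N. cross_term \<xi> i k) - \<xi> i)"
    unfolding err_vec_eq_fluctuation_plus_bias[OF i(1)] by (rule norm_triangle_ineq)
  moreover have "cmod ((\<Sum>k<N. cross_term \<xi> i k) - \<xi> i) \<le> \<beta> * linfty \<xi>"
    using norm_bias_le[OF \<xi> i(1)] mult_right_mono[OF bal L] by linarith
  ultimately have "(c - \<beta>) * linfty \<xi> \<le> cmod (fluctuation \<xi> i \<delta>)"
    using i(2) by (simp add: left_diff_distrib)
  with i(1) show "\<delta> \<in> (\<Union>i\<in>\<Delta>. {\<delta>. (c - \<beta>) * linfty \<xi> \<le> cmod (fluctuation \<xi> i \<delta>)})"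
    by blast
qed

abbreviation error_prob :: "real \<Rightarrow> (nat \<Rightarrow> complex) \<Rightarrow> real" where
  "error_prob c \<xi> \<equiv> measure_pmf.prob (bernoulli_scheme r Nv mv)
     {\<delta>. linfty (err_vec u r Nv mv \<Delta> \<delta> \<xi>) > c * linfty \<xi>}"

lemma error_prob_zero_vector:
  assumes "ell2 \<xi>" "\<not> linfty \<xi> > 0"
  shows "error_prob c \<xi> = 0"
proof -
  have "\<xi> = (\<lambda>_. 0)" using ell2_linfty_le_0_imp_zero assms by fastforce
  moreover have "err_vec u r Nv mv \<Delta> \<delta> (\<lambda>_. 0) = (\<lambda>_. 0)" for \<delta>
    by (rule ext) (simp add: err_vec_def)
  ultimately show ?thesis by simp
qed

lemma error_prob_le:
  fixes \<xi> :: "nat \<Rightarrow> complex" and \<beta> c \<gamma> :: real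
  assumes \<xi>: "ell2 \<xi>" and bal: "balance_opnorm u N M \<le> \<beta>" and \<beta>: "0 \<le> \<beta>" "\<beta> < c"
    and \<gamma>: "0 < \<gamma>" "\<gamma> \<le> 1"
    and \<Lambda>_small: "4 * \<Lambda> * ln (4 * sparsity / \<gamma>) \<le> c - \<beta>"
    and \<Upsilon>_small: "16 * ln (4 * sparsity / \<gamma>) * \<Upsilon> \<le> (c - \<beta>)\<^sup>2"
  shows "error_prob c \<xi> \<le> \<gamma>"
proof (cases "linfty \<xi> > 0")
  case False
  then show ?thesis using error_prob_zero_vector[OF \<xi>] \<gamma> by simp
next
  case L: True
  define G where "G = ln (4 * sparsity / \<gamma>)"
  have s: "sparsity \<ge> 3" using sparsity_ge_3 by linarith
  have G: "G > 0" unfolding G_def using s \<gamma> by (simp add: field_simps)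
  have tail: "measure_pmf.prob (bernoulli_scheme r Nv mv)
      {\<delta>. (c - \<beta>) * linfty \<xi> \<le> cmod (fluctuation \<xi> i \<delta>)} \<le> 4 * exp (- G)" if i: "i \<in> \<Delta>" for i
  proof (rule prob_fluctuation_ge_le[OF \<xi> i _ G])
    show "4 * (\<Lambda> * linfty \<xi>) * G \<le> (c - \<beta>) * linfty \<xi>"
      using mult_right_mono[OF \<Lambda>_small, of "linfty \<xi>"] L by (simp add: G_def mult_ac)
    show "16 * G * (\<Upsilon> * (linfty \<xi>)\<^sup>2) \<le> ((c - \<beta>) * linfty \<xi>)\<^sup>2"
      using mult_right_mono[OF \<Upsilon>_small, of "(linfty \<xi>)\<^sup>2"] by (simp add: G_def mult_ac power_mult_distrib)
  qed (use \<beta> L in simp)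
  have "error_prob c \<xi>
      \<le> measure_pmf.prob (bernoulli_scheme r Nv mv)
           (\<Union>i\<in>\<Delta>. {\<delta>. (c - \<beta>) * linfty \<xi> \<le> cmod (fluctuation \<xi> i \<delta>)})"
    using error_event_subset[OF \<xi> bal] \<beta> by (intro measure_pmf.finite_measure_mono) auto
  also have "\<dots> \<le> (\<Sum>i\<in>\<Delta>. measure_pmf.prob (bernoulli_scheme r Nv mv)
      {\<delta>. (c - \<beta>) * linfty \<xi> \<le> cmod (fluctuation \<xi> i \<delta>)})"
    by (rule measure_pmf.finite_measure_subadditive_finite[OF finite_\<Delta>]) auto
  also have "\<dots> \<le> sparsity * (4 * exp (- G))"
    using sum_mono[of \<Delta>, OF tail] card_\<Delta> by simp
  also have "\<dots> = \<gamma>"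
    using s \<gamma> by (simp add: G_def exp_minus)
  finally show ?thesis .
qed

lemma error_prob_le_log:
  fixes \<xi> :: "nat \<Rightarrow> complex" and \<beta> c \<gamma> :: real
  assumes \<xi>: "ell2 \<xi>" and bal: "balance_opnorm u N M \<le> \<beta>" and \<beta>: "0 \<le> \<beta>" "\<beta> < c"
    and \<gamma>: "0 < \<gamma>"
    and \<Lambda>_small: "8 * \<Lambda> * (ln (sparsity / \<gamma>) + 1) \<le> c - \<beta>"
    and \<Upsilon>_small: "32 * (ln (sparsity / \<gamma>) + 1) * \<Upsilon> \<le> (c - \<beta>)\<^sup>2"
  shows "error_prob c \<xi> \<le> \<gamma>"
proof (cases "\<gamma> \<le> 1")
  case True
  define s where "s = sparsity"
  have s: "s \<ge> 3" unfolding s_def using sparsity_ge_3 by linarith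
  have "0 \<le> ln (s / \<gamma>)" using s \<gamma> True by simp
  have ln_4: "ln (4::real) \<le> 2"
    using ln_le_minus_one[of 4] ln_mult[of 2 2] ln_le_minus_one[of 2] by simp
  have "ln (4 * s / \<gamma>) = ln 4 + ln (s / \<gamma>)"
    using ln_mult_pos[of 4 "s / \<gamma>"] s \<gamma> by simp
  also have "\<dots> \<le> 2 * (ln (s / \<gamma>) + 1)"
    using ln_4 \<open>0 \<le> ln (s / \<gamma>)\<close> by simp
  finally have "ln (4 * s / \<gamma>) \<le> 2 * (ln (s / \<gamma>) + 1)" .
  note G = this[unfolded s_def]
  show ?thesis
  proof (rule error_prob_le[OF \<xi> bal \<beta> \<gamma> True])
    have "4 * \<Lambda> * ln (4 * sparsity / \<gamma>) \<le> 4 * \<Lambda> * (2 * (ln (sparsity / \<gamma>) + 1))"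
      using Lambda_nonneg by (intro mult_left_mono G) auto
    also have "\<dots> = 8 * \<Lambda> * (ln (sparsity / \<gamma>) + 1)" by (simp add: algebra_simps)
    finally show "4 * \<Lambda> * ln (4 * sparsity / \<gamma>) \<le> c - \<beta>" using \<Lambda>_small by linarith
    have "16 * ln (4 * sparsity / \<gamma>) * \<Upsilon> \<le> 16 * (2 * (ln (sparsity / \<gamma>) + 1)) * \<Upsilon>"
      using Upsilon_nonneg by (intro mult_right_mono mult_left_mono G) auto
    also have "\<dots> = 32 * (ln (sparsity / \<gamma>) + 1) * \<Upsilon>" by (simp add: algebra_simps)
    finally show "16 * ln (4 * sparsity / \<gamma>) * \<Upsilon> \<le> (c - \<beta>)\<^sup>2" using \<Upsilon>_small by linarith
  qed
next
  case False
  then show ?thesis by (meson measure_pmf.prob_le_1 not_le order.trans less_imp_le)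
qed

text \<open>With every \<open>q\<^sub>k = 1\<close> the scheme samples all rows, so \<open>D = P\<^sub>N\<close> and only the deterministic
  part of the error remains.\<close>

lemma error_prob_full_sampling:
  assumes q1: "\<forall>k\<in>{1..r}. qlev Nv mv k = 1"
    and \<xi>: "ell2 \<xi>" and bal: "balance_opnorm u N M \<le> \<beta>" and \<beta>: "0 \<le> \<beta>" "\<beta> \<le> c"
  shows "error_prob c \<xi> = 0"
proof -
  have q: "q k = 1" if "k < N" for k
    using lev_cover[OF Nv_0 that] qidx_eq_qlev q1 by metis
  have "bernoulli_scheme r Nv mv = Pi_pmf {..<N} False (\<lambda>_. return_pmf True)"
    unfolding bernoulli_scheme_def using q by (intro Pi_pmf_cong) (auto simp: bernoulli_pmf_1)
  then have scheme: "bernoulli_scheme r Nv mv = return_pmf (\<lambda>k. k < N)" by simp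
  have L: "0 \<le> linfty \<xi>" using ell2_linfty_nonneg[OF \<xi>] .
  have "cmod (err_vec u r Nv mv \<Delta> (\<lambda>k. k < N) \<xi> i) \<le> c * linfty \<xi>" for i
  proof (cases "i \<in> \<Delta>")
    case True
    have "fluctuation \<xi> i (\<lambda>k. k < N) = 0" by (simp add: fluctuation_def q)
    then have "cmod (err_vec u r Nv mv \<Delta> (\<lambda>k. k < N) \<xi> i) \<le> balance_opnorm u N M * linfty \<xi>"
      using norm_bias_le[OF \<xi> True] by (simp add: err_vec_eq_fluctuation_plus_bias[OF True])
    also have "\<dots> \<le> c * linfty \<xi>" using bal \<beta> L by (intro mult_right_mono) auto
    finally show ?thesis .
  qed (use \<beta> L in \<open>simp add: err_vec_def\<close>)
  then have "linfty (err_vec u r Nv mv \<Delta> (\<lambda>k. k < N) \<xi>) \<le> c * linfty \<xi>" by (rule linfty_le)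
  then show ?thesis by (simp add: scheme measure_pmf_zero_iff)
qed

abbreviation "\<alpha> \<equiv> inverse (2 * sqrt (log 2 (4 * sqrt sparsity * Kmax r Nv mv * real M)))"

lemma alpha_bounds:
  "\<alpha> > 0" "\<alpha> \<le> 1/4" "1/16 \<le> \<alpha>\<^sup>2 * ln (sqrt sparsity * Kmax r Nv mv * real M)"
  "1/4 \<le> \<alpha> * ln (sqrt sparsity * Kmax r Nv mv * real M)"
proof -
  have "3 \<le> sparsity" using sparsity_ge_3 by linarith
  then have "(4/3)\<^sup>2 \<le> sparsity" by (simp add: power2_eq_square)
  then have "4/3 \<le> sqrt sparsity" by (rule real_le_rsqrt)
  then have "4/3 * 1 * 3 \<le> sqrt sparsity * Kmax r Nv mv * real M"
    using Kmax_ge_1 M_ge_3 by (intro mult_mono) (auto simp del: of_nat_sum)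
  then show "\<alpha> > 0" "\<alpha> \<le> 1/4" "1/16 \<le> \<alpha>\<^sup>2 * ln (sqrt sparsity * Kmax r Nv mv * real M)"
    "1/4 \<le> \<alpha> * ln (sqrt sparsity * Kmax r Nv mv * real M)"
    using balancing_constant_bounds[of "sqrt sparsity * Kmax r Nv mv * real M"] by (simp_all add: mult.assoc)
qed

lemma balance_opnorm_le_alpha:
  assumes "weak_balancing u N (Kmax r Nv mv) M (\<Sum>k=1..r. sv k)"
  shows "balance_opnorm u N M \<le> \<alpha> / 4"
  using assms by (simp add: weak_balancing_def inverse_mult_distrib)

lemma error_prob_alpha_le:
  assumes wb: "weak_balancing u N (Kmax r Nv mv) M (\<Sum>k=1..r. sv k)" and \<xi>: "ell2 \<xi>" and \<gamma>: "\<gamma> > 0"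
    and \<Lambda>_small: "10000 * \<Lambda> * (ln (sparsity / \<gamma>) + 1) * ln (sqrt sparsity * Kmax r Nv mv * real M) \<le> 1"
    and \<Upsilon>_small: "10000 * \<Upsilon> * (ln (sparsity / \<gamma>) + 1) * ln (sqrt sparsity * Kmax r Nv mv * real M) \<le> 1"
  shows "error_prob \<alpha> \<xi> \<le> \<gamma>"
proof -
  define a H l where "a = \<alpha>" and "H = ln (sparsity / \<gamma>) + 1"
    and "l = ln (sqrt sparsity * Kmax r Nv mv * real M)"
  have a: "0 < a" "1/16 \<le> a\<^sup>2 * l" "1/4 \<le> a * l"
    using alpha_bounds unfolding a_def l_def by simp_all
  have "1/4 * (\<Lambda> * H) \<le> a * (1 / 10000)"
    using \<Lambda>_small a unfolding H_def[symmetric] l_def[symmetric]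
    by (intro mult_le_of_mult_le) (auto simp: mult_ac)
  then have \<Lambda>H: "8 * \<Lambda> * H \<le> a - a / 4" using a by (simp add: mult_ac)
  have "1/16 * (\<Upsilon> * H) \<le> a\<^sup>2 * (1 / 10000)"
    using \<Upsilon>_small a unfolding H_def[symmetric] l_def[symmetric]
    by (intro mult_le_of_mult_le) (auto simp: mult_ac)
  then have "32 * H * \<Upsilon> \<le> 512 * (a\<^sup>2 * (1 / 10000))" by (simp add: mult_ac)
  also have "\<dots> \<le> (a - a / 4)\<^sup>2" by (simp add: power2_eq_square)
  finally have \<Upsilon>H: "32 * H * \<Upsilon> \<le> (a - a / 4)\<^sup>2" .
  show ?thesis
    unfolding a_def[symmetric]
    by (rule error_prob_le_log[OF \<xi> balance_opnorm_le_alpha[OF wb, folded a_def] _ _ \<gamma>])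
       (use a \<Lambda>H \<Upsilon>H in \<open>simp_all add: H_def\<close>)
qed

lemma error_prob_half_le:
  assumes wb: "weak_balancing u N (Kmax r Nv mv) M (\<Sum>k=1..r. sv k)" and \<xi>: "ell2 \<xi>" and \<gamma>: "\<gamma> > 0"
    and \<Lambda>_small: "10000 * \<Lambda> * (ln (sparsity / \<gamma>) + 1) \<le> 1"
    and \<Upsilon>_small: "10000 * \<Upsilon> * (ln (sparsity / \<gamma>) + 1) \<le> 1"
  shows "error_prob (1/2) \<xi> \<le> \<gamma>"
proof -
  define a H where "a = \<alpha>" and "H = ln (sparsity / \<gamma>) + 1"
  have a: "0 < a" "a \<le> 1/4" using alpha_bounds by (simp_all add: a_def)
  then have margin: "7/16 \<le> 1/2 - a / 4" by simp
  then have "(7/16)\<^sup>2 \<le> (1/2 - a / 4)\<^sup>2" by (rule power_mono) simp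
  moreover have "10000 * \<Lambda> * H \<le> 1" "10000 * \<Upsilon> * H \<le> 1"
    unfolding H_def by (fact \<Lambda>_small \<Upsilon>_small)+
  ultimately have "8 * \<Lambda> * H \<le> 1/2 - a / 4" "32 * H * \<Upsilon> \<le> (1/2 - a / 4)\<^sup>2"
    using margin by (simp_all add: power2_eq_square algebra_simps)
  then show ?thesis
    by (intro error_prob_le_log[OF \<xi> balance_opnorm_le_alpha[OF wb, folded a_def] _ _ \<gamma>])
       (use a in \<open>simp_all add: H_def\<close>)
qed

lemma error_prob_full_sampling_alpha_half:
  assumes "\<forall>k\<in>{1..r}. qlev Nv mv k = 1"
    and "weak_balancing u N (Kmax r Nv mv) M (\<Sum>k=1..r. sv k)" and "ell2 \<xi>"
  shows "error_prob \<alpha> \<xi> = 0" "error_prob (1/2) \<xi> = 0"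
proof -
  have zero: "error_prob c \<xi> = 0" if "\<alpha> / 4 \<le> c" for c
    by (rule error_prob_full_sampling[OF assms(1,3) balance_opnorm_le_alpha[OF assms(2)]])
       (use alpha_bounds(1) that in auto)
  show "error_prob \<alpha> \<xi> = 0" by (rule zero) (use alpha_bounds(1) in linarith)
  show "error_prob (1/2) \<xi> = 0" by (rule zero) (use alpha_bounds(2) in linarith)
qed

end

theorem proposition7p12:
  shows "\<exists>C0::real. C0 > 0 \<and>
   (\<forall>(u::nat \<Rightarrow> nat \<Rightarrow> complex) (r::nat) (Nv::nat \<Rightarrow> nat) (Mv::nat \<Rightarrow> nat) (mv::nat \<Rightarrow> nat)
      (sv::nat \<Rightarrow> nat) (\<Delta>::nat set) (\<xi>::nat \<Rightarrow> complex) (\<gamma>::real).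
     isometry_matrix u \<and> r \<ge> 1 \<and> Nv 0 = 0 \<and> Mv 0 = 0 \<and> 1 \<le> Nv 1 \<and>
     (\<forall>k\<in>{2..r}. Nv (k - 1) < Nv k) \<and> (\<forall>k\<in>{2..r}. Mv (k - 1) < Mv k) \<and>
     (\<forall>k\<in>{1..r}. 1 \<le> mv k \<and> mv k \<le> Nv k - Nv (k - 1)) \<and>
     \<Delta> \<subseteq> {..<Mv r} \<and> (\<forall>k\<in>{1..r}. card (\<Delta> \<inter> lev Mv k) = sv k) \<and>
     (\<Sum>k=1..r. sv k) \<ge> 3 \<and>
     weak_balancing u (Nv r) (Kmax r Nv mv) (Mv r) (\<Sum>k=1..r. sv k) \<and>
     ell2 \<xi> \<and> \<gamma> > 0
   \<longrightarrow>
     (let s = real (\<Sum>k=1..r. sv k); K = Kmax r Nv mv; M = real (Mv r);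
          \<Lambda> = Lambda u r Nv Mv mv sv; \<Upsilon> = Upsilon u r Nv Mv mv sv;
          \<alpha> = inverse (2 * sqrt (log 2 (4 * sqrt s * K * M)));
          P = (\<lambda>a. measure_pmf.prob (bernoulli_scheme r Nv mv)
                 {\<delta>. linfty (err_vec u r Nv mv \<Delta> \<delta> \<xi>) > a * linfty \<xi>})
      in ((C0 * \<Lambda> * (ln (s / \<gamma>) + 1) * ln (sqrt s * K * M) \<le> 1 \<and>
           C0 * \<Upsilon> * (ln (s / \<gamma>) + 1) * ln (sqrt s * K * M) \<le> 1
             \<longrightarrow> P \<alpha> \<le> \<gamma>) \<and>
          (C0 * \<Lambda> * (ln (s / \<gamma>) + 1) \<le> 1 \<and> C0 * \<Upsilon> * (ln (s / \<gamma>) + 1) \<le> 1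
             \<longrightarrow> P (1 / 2) \<le> \<gamma>) \<and>
          ((\<forall>k\<in>{1..r}. qlev Nv mv k = 1) \<longrightarrow> P \<alpha> = 0 \<and> P (1 / 2) = 0))))"
  unfolding Let_def
proof ((intro exI[of _ "10000::real"] conjI allI impI; (elim conjE)?), goal_cases)
  case 1
  show ?case by simp
next
  case (2 u r Nv Mv mv sv \<Delta> \<xi> \<gamma>)
  then show ?case
    by (intro multilevel_sampling.error_prob_alpha_le multilevel_sampling.intro) auto
next
  case (3 u r Nv Mv mv sv \<Delta> \<xi> \<gamma>)
  then show ?case
    by (intro multilevel_sampling.error_prob_half_le multilevel_sampling.intro) auto
next
  case (4 u r Nv Mv mv sv \<Delta> \<xi> \<gamma>)
  then show ?case
    by (intro multilevel_sampling.error_prob_full_sampling_alpha_half(1) multilevel_sampling.intro) auto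
next
  case (5 u r Nv Mv mv sv \<Delta> \<xi> \<gamma>)
  then show ?case
    by (intro multilevel_sampling.error_prob_full_sampling_alpha_half(2) multilevel_sampling.intro) auto
qed

end
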